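(* Let $G=(V,E)$ be a chordal graph and let $\sigma$ be any LexDFS order of $G$, starting at vertex $s$. Then there is a vertex order $\rho$ of $V$ ending in $s$ (namely $\rho=\sigma^-$) such that the procedure LexDFS$^+$-Chordal on input $(G,s,\rho)$ outputs $\sigma$. In other words, the procedure can compute every LexDFS order of a chordal graph.
   Context: All graphs are finite, simple, undirected and connected; $n=|V|$, $m=|E|$, $N(v)$ denotes the neighborhood of $v$. A graph is chordal if it has no induced cycle of length greater than 3. A vertex order is a linear order $\sigma=(v_1,\dots,v_n)$ of $V$; $\sigma(i)=v_i$; $u\prec_\sigma v$ means $u$ appears before $v$; $\sigma^-$ is the reverse order. Partition refinement: for an ordered partition $\mathcal Q=(Q_1,\dots,Q_k)$ of $V$ and $S'\subseteq V$, refining $\mathcal Q$ with $S'$ replaces each $Q_i$ by $(Q_i\cap S',\,Q_i\setminus S')$ whenever both are nonempty. DFS: a search that starts at a vertex and repeatedly visits an unvisited neighbor of the most recently visited vertex that still has an unvisited neighbor. DFS$^+(\tau)$ on a graph $H$: the DFS of $H$ starting at the last vertex of $\tau$ that, among the vertices that may be visited next, always visits the rightmost one in $\tau$. LexDFS (started at $s$): label $s$ with $(0)$, all others with the empty label; for $i=1,\dots,n$ pick an unnumbered vertex $v$ with lexicographically largest label, set $\sigma(i)=v$, prepend $i$ to the label of every unnumbered neighbor of $v$. A LexDFS order is any possible output. LexBFS (started at $s$): same, but $s$ gets $(n)$ and $n-i$ is appended instead of prepending $i$. For $\rho$ ending in $s$, LexDFS$^+(\rho)$ / LexBFS$^+(\rho)$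 breaks ties among largest labels by choosing the rightmost vertex in $\rho$. $\mathcal L$-tree of a vertex order $(v_1,\dots,v_n)$: the spanning tree rooted at $v_1$ with an edge from each $v_i$ ($i>1$) to its rightmost neighbor $v_j$ with $j<i$. Procedure Ordering$(G,T,s,\rho)$: let $\beta$ be the reverse of a BFS order of the tree $T$ starting at $s$; $\mathcal Q=(V)$; for $i=1,\dots,n$, with $v=\beta(i)$, refine $\mathcal Q$ with $\{w\in N(v): w\prec_\beta v\}$; order each class of $\mathcal Q$ according to $\rho^-$ and move $\{s\}$ to the leftmost position; let $\tau$ be the reverse of the resulting order of all vertices; output DFS$^+(\tau)$ on $T$. Procedure LexDFS$^+$-Chordal$(G,s,\rho)$: compute the LexBFS$^+(\rho)$ order $\pi$ of $G$, let $T$ be the $\mathcal L$-tree of $\pi$, output Ordering$(G,T,s,\rho)$. *)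

theory Defs
  imports Main
begin

definition graph :: "'a set \<Rightarrow> ('a \<times> 'a) set \<Rightarrow> bool" where
  "graph V E \<longleftrightarrow> finite V \<and> V \<noteq> {} \<and> E \<subseteq> V \<times> V \<and> sym E \<and> (\<forall>v. (v, v) \<notin> E)
     \<and> (\<forall>u\<in>V. \<forall>v\<in>V. (u, v) \<in> E\<^sup>*)"

definition induced_cycle :: "('a \<times> 'a) set \<Rightarrow> 'a list \<Rightarrow> bool" where
  "induced_cycle E cs \<longleftrightarrow> distinct cs \<and>
     (\<forall>i<length cs. \<forall>j<length cs. i \<noteq> j \<longrightarrow>
        ((cs ! i, cs ! j) \<in> E \<longleftrightarrow> (j = Suc i mod length cs \<or> i = Suc j mod length cs)))"

definition chordal :: "'a set \<Rightarrow> ('a \<times> 'a) set \<Rightarrow> bool" where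
  "chordal V E \<longleftrightarrow> \<not> (\<exists>cs. set cs \<subseteq> V \<and> length cs > 3 \<and> induced_cycle E cs)"

definition vertex_order :: "'a set \<Rightarrow> 'a list \<Rightarrow> bool" where
  "vertex_order V \<sigma> \<longleftrightarrow> distinct \<sigma> \<and> set \<sigma> = V"

definition prec :: "'a list \<Rightarrow> 'a \<Rightarrow> 'a \<Rightarrow> bool" where
  "prec xs u v \<longleftrightarrow> (\<exists>i j. i < j \<and> j < length xs \<and> xs ! i = u \<and> xs ! j = v)"

text \<open>Lexicographic order on labels (a proper prefix is smaller).\<close>
definition lex_le :: "nat list \<Rightarrow> nat list \<Rightarrow> bool" where
  "lex_le xs ys \<longleftrightarrow> xs = ys \<or> (xs, ys) \<in> lexord {(a, b). a < b}"

text \<open>Label of vertex v after the vertices of the prefix p have been numbered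
  (step j+1 numbered p!j; numbers are prepended; s initially has label (0)).\<close>
definition ldfs_label :: "('a \<times> 'a) set \<Rightarrow> 'a \<Rightarrow> 'a list \<Rightarrow> 'a \<Rightarrow> nat list" where
  "ldfs_label E s p v =
     rev [Suc j. j \<leftarrow> [0..<length p], (p ! j, v) \<in> E] @ (if v = s then [0] else [])"

definition is_lexdfs_order :: "'a set \<Rightarrow> ('a \<times> 'a) set \<Rightarrow> 'a \<Rightarrow> 'a list \<Rightarrow> bool" where
  "is_lexdfs_order V E s \<sigma> \<longleftrightarrow> s \<in> V \<and> vertex_order V \<sigma> \<and>
     (\<forall>i<length \<sigma>. \<forall>w \<in> V - set (take i \<sigma>).
        lex_le (ldfs_label E s (take i \<sigma>) w) (ldfs_label E s (take i \<sigma>) (\<sigma> ! i)))"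

text \<open>Label in LexBFS: s starts with (n); at step j+1 the value n-(j+1) is appended.\<close>
definition lbfs_label :: "('a \<times> 'a) set \<Rightarrow> 'a \<Rightarrow> nat \<Rightarrow> 'a list \<Rightarrow> 'a \<Rightarrow> nat list" where
  "lbfs_label E s n p v =
     (if v = s then [n] else []) @ [n - Suc j. j \<leftarrow> [0..<length p], (p ! j, v) \<in> E]"

text \<open>Greedy label search: at each step pick an unnumbered vertex with largest label,
  breaking ties by the rightmost vertex in \<rho>.\<close>
fun greedy_search :: "('a list \<Rightarrow> 'a \<Rightarrow> nat list) \<Rightarrow> 'a list \<Rightarrow> nat \<Rightarrow> 'a list" where
  "greedy_search lab \<rho> 0 = []"
| "greedy_search lab \<rho> (Suc k) =
     (let p = greedy_search lab \<rho> k;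
          U = filter (\<lambda>v. v \<notin> set p) \<rho>;
          M = filter (\<lambda>v. \<forall>w \<in> set U. lex_le (lab p w) (lab p v)) U
      in p @ [last M])"

definition lexbfs_plus :: "('a \<times> 'a) set \<Rightarrow> 'a list \<Rightarrow> 'a list" where
  "lexbfs_plus E \<rho> = greedy_search (lbfs_label E (last \<rho>) (length \<rho>)) \<rho> (length \<rho>)"

definition ltree :: "('a \<times> 'a) set \<Rightarrow> 'a list \<Rightarrow> ('a \<times> 'a) set" where
  "ltree E \<pi> = {(u, v). \<exists>i<length \<pi>. \<exists>j<i. (\<pi> ! j, \<pi> ! i) \<in> E \<and>
       (\<forall>k. j < k \<and> k < i \<longrightarrow> (\<pi> ! k, \<pi> ! i) \<notin> E) \<and>
       ((u, v) = (\<pi> ! i, \<pi> ! j) \<or> (u, v) = (\<pi> ! j, \<pi> ! i))}"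

definition is_bfs_order :: "'a set \<Rightarrow> ('a \<times> 'a) set \<Rightarrow> 'a \<Rightarrow> 'a list \<Rightarrow> bool" where
  "is_bfs_order V E s \<beta> \<longleftrightarrow> vertex_order V \<beta> \<and> \<beta> \<noteq> [] \<and> \<beta> ! 0 = s \<and>
     (\<forall>i. 0 < i \<and> i < length \<beta> \<longrightarrow>
        (let p = take i \<beta>;
             x = hd (filter (\<lambda>x. \<exists>w \<in> V - set p. (x, w) \<in> E) p)
         in (x, \<beta> ! i) \<in> E))"

text \<open>DFS+(\<tau>) on H: start at last \<tau>; visit, among the unvisited neighbours of the
  most recently visited vertex that still has an unvisited neighbour, the rightmost in \<tau>.\<close>
fun dfs_plus_aux :: "('a \<times> 'a) set \<Rightarrow> 'a list \<Rightarrow> nat \<Rightarrow> 'a list" where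
  "dfs_plus_aux H \<tau> 0 = [last \<tau>]"
| "dfs_plus_aux H \<tau> (Suc k) =
     (let p = dfs_plus_aux H \<tau> k;
          U = filter (\<lambda>v. v \<notin> set p) \<tau>;
          x = last (filter (\<lambda>x. \<exists>w \<in> set U. (x, w) \<in> H) p)
      in p @ [last (filter (\<lambda>w. (x, w) \<in> H) U)])"

definition dfs_plus :: "('a \<times> 'a) set \<Rightarrow> 'a list \<Rightarrow> 'a list" where
  "dfs_plus H \<tau> = dfs_plus_aux H \<tau> (length \<tau> - 1)"

definition refine :: "'a set list \<Rightarrow> 'a set \<Rightarrow> 'a set list" where
  "refine Q S = concat (map (\<lambda>C. if C \<inter> S \<noteq> {} \<and> C - S \<noteq> {} then [C \<inter> S, C - S] else [C]) Q)"

text \<open>Ordering(G,T,s,\<rho>), where \<beta> is the reverse of the chosen BFS order of T from s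
  (the BFS order is the only nondeterministic choice; it is a parameter here).\<close>
definition ordering :: "'a set \<Rightarrow> ('a \<times> 'a) set \<Rightarrow> ('a \<times> 'a) set \<Rightarrow> 'a \<Rightarrow> 'a list \<Rightarrow> 'a list \<Rightarrow> 'a list" where
  "ordering V E T s \<rho> \<beta> =
     (let Q = foldl (\<lambda>Q v. refine Q {w. (v, w) \<in> E \<and> prec \<beta> w v}) [V] \<beta>;
          ord = s # filter (\<lambda>v. v \<noteq> s) (concat (map (\<lambda>C. filter (\<lambda>v. v \<in> C) (rev \<rho>)) Q));
          \<tau> = rev ord
      in dfs_plus T \<tau>)"

text \<open>All possible outputs of LexDFS+-Chordal(G,s,\<rho>) (one per BFS choice).\<close>
definition lexdfs_plus_chordal_outputs :: "'a set \<Rightarrow> ('a \<times> 'a) set \<Rightarrow> 'a \<Rightarrow> 'a list \<Rightarrow> 'a list set" where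
  "lexdfs_plus_chordal_outputs V E s \<rho> =
     (let T = ltree E (lexbfs_plus E \<rho>)
      in {ordering V E T s \<rho> (rev b) | b. is_bfs_order V T s b})"

end

(*
  Let \<sigma> be a LexDFS order of the chordal graph G starting at s. Its four-point condition
  (a < b < c, ac an edge, ab not: some d with a < d < b is adjacent to b but not to c) together
  with chordality shows that the earlier neighbours of every vertex form a clique. Hence
  LexBFS+ started from the reverse of \<sigma> orients every edge as \<sigma> does, and its L-tree is
  the L-tree T of \<sigma>. T is the DFS tree of \<sigma>: the parent of v is its rightmost earlier
  neighbour, and the earlier end of every edge is an ancestor of the later one. For any BFS
  order of T, the first vertex of the refinement sequence that separates two siblings of T
  favours the \<sigma>-earlier one (again by the four-point condition), so the order \<tau> handed to
  DFS+ lists siblings in reverse \<sigma> order. DFS+ on T then backtracks to the parent of the next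
  vertex of \<sigma> and picks exactly that vertex: it reproduces \<sigma>.
*)

theory Submission
  imports Defs
begin

lemma prec_Nil [simp]: "\<not> prec [] u v"
  by (simp add: prec_def)

lemma prec_Cons: "prec (x # xs) u v \<longleftrightarrow> (u = x \<and> v \<in> set xs) \<or> prec xs u v"
proof
  assume "prec (x # xs) u v"
  then obtain i j where ij: "i < j" "j < length (x # xs)" "(x # xs) ! i = u" "(x # xs) ! j = v"
    unfolding prec_def by blast
  then obtain j' where j: "j = Suc j'" by (cases j) auto
  show "(u = x \<and> v \<in> set xs) \<or> prec xs u v"
  proof (cases i)
    case 0
    then show ?thesis using ij j by auto
  next
    case (Suc i')
    then have "prec xs u v" unfolding prec_def using ij j by (intro exI[of _ i'] exI[of _ j']) auto
    then show ?thesis ..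
  qed
next
  assume "(u = x \<and> v \<in> set xs) \<or> prec xs u v"
  then show "prec (x # xs) u v"
  proof
    assume "u = x \<and> v \<in> set xs"
    then obtain j where "j < length xs" "xs ! j = v" "u = x" by (auto simp: in_set_conv_nth)
    then show ?thesis unfolding prec_def by (intro exI[of _ 0] exI[of _ "Suc j"]) auto
  next
    assume "prec xs u v"
    then obtain i j where "i < j" "j < length xs" "xs ! i = u" "xs ! j = v" unfolding prec_def by blast
    then show ?thesis unfolding prec_def by (intro exI[of _ "Suc i"] exI[of _ "Suc j"]) auto
  qed
qed

lemma prec_in_set: "prec xs u v \<Longrightarrow> u \<in> set xs \<and> v \<in> set xs"
  by (induction xs) (auto simp: prec_Cons)

lemma prec_append: "prec (xs @ ys) u v \<longleftrightarrow> prec xs u v \<or> (u \<in> set xs \<and> v \<in> set ys) \<or> prec ys u v"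
  by (induction xs) (auto simp: prec_Cons)

lemma prec_filter: "prec (filter P xs) u v \<longleftrightarrow> prec xs u v \<and> P u \<and> P v"
  by (induction xs) (auto simp: prec_Cons dest: prec_in_set)

lemma prec_rev: "prec (rev xs) u v \<longleftrightarrow> prec xs v u"
  by (induction xs) (auto simp: prec_Cons prec_append)

lemma prec_asym: "distinct xs \<Longrightarrow> prec xs u v \<Longrightarrow> \<not> prec xs v u"
  by (induction xs) (auto simp: prec_Cons dest: prec_in_set)

lemma prec_irrefl: "distinct xs \<Longrightarrow> \<not> prec xs u u"
  by (meson prec_asym)

lemma prec_total: "u \<in> set xs \<Longrightarrow> v \<in> set xs \<Longrightarrow> u \<noteq> v \<Longrightarrow> prec xs u v \<or> prec xs v u"
  by (induction xs) (auto simp: prec_Cons)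

lemma prec_trans: "distinct xs \<Longrightarrow> prec xs u v \<Longrightarrow> prec xs v w \<Longrightarrow> prec xs u w"
  by (induction xs) (auto simp: prec_Cons dest: prec_in_set)

lemma prec_nth: "distinct xs \<Longrightarrow> i < length xs \<Longrightarrow> j < length xs \<Longrightarrow> prec xs (xs ! i) (xs ! j) \<longleftrightarrow> i < j"
  unfolding prec_def using nth_eq_iff_index_eq by (metis order.strict_trans)

lemma prec_take_drop:
  assumes "distinct xs" "prec xs u v"
  shows "prec (take i xs) u v \<or> (u \<in> set (take i xs) \<and> v \<in> set (drop i xs)) \<or> prec (drop i xs) u v"
    and "set (take i xs) \<inter> set (drop i xs) = {}"
proof -
  show "prec (take i xs) u v \<or> (u \<in> set (take i xs) \<and> v \<in> set (drop i xs)) \<or> prec (drop i xs) u v"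
    using assms(2) prec_append[of "take i xs" "drop i xs"] by simp
  show "set (take i xs) \<inter> set (drop i xs) = {}"
    using assms(1) by (metis append_take_drop_id distinct_append)
qed

lemma prec_take_closed: "distinct xs \<Longrightarrow> prec xs u v \<Longrightarrow> v \<in> set (take i xs) \<Longrightarrow> u \<in> set (take i xs)"
  by (meson disjoint_iff prec_in_set prec_take_drop)

lemma prec_take:
  "distinct xs \<Longrightarrow> prec xs u v \<Longrightarrow> u \<in> set (take i xs) \<Longrightarrow> v \<in> set (take i xs) \<Longrightarrow> prec (take i xs) u v"
  by (meson disjoint_iff prec_in_set prec_take_drop)

lemma nth_notin_set_take: "distinct xs \<Longrightarrow> k < length xs \<Longrightarrow> xs ! k \<notin> set (take k xs)"
proof
  assume "distinct xs" "k < length xs" "xs ! k \<in> set (take k xs)"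
  then obtain l where "l < k" "xs ! l = xs ! k" by (auto simp: in_set_conv_nth)
  then show False using \<open>distinct xs\<close> \<open>k < length xs\<close> nth_eq_iff_index_eq by fastforce
qed

lemma prec_nth_in_take: "distinct xs \<Longrightarrow> k < length xs \<Longrightarrow> prec xs u (xs ! k) \<Longrightarrow> u \<in> set (take k xs)"
proof -
  assume d: "distinct xs" and k: "k < length xs" and "prec xs u (xs ! k)"
  then obtain i j where ij: "i < j" "j < length xs" "xs ! i = u" "xs ! j = xs ! k" unfolding prec_def
    by blast
  then have "j = k" using d k nth_eq_iff_index_eq by metis
  then show ?thesis
    using ij by (metis in_set_conv_nth length_take min_less_iff_conj nth_take order.strict_trans)
qed

lemma prec_last: "y \<in> set xs \<Longrightarrow> y \<noteq> last xs \<Longrightarrow> prec xs y (last xs)"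
proof (induction xs rule: rev_induct)
  case (snoc x xs)
  then show ?case by (auto simp: prec_append)
qed simp

lemma last_eq_if_prec:
  assumes "distinct xs" "q \<in> set xs" "\<And>y. y \<in> set xs \<Longrightarrow> y \<noteq> q \<Longrightarrow> prec xs y q"
  shows "last xs = q"
proof (rule ccontr)
  assume "last xs \<noteq> q"
  moreover have "last xs \<in> set xs" using assms(2) by (cases xs rule: rev_cases) auto
  ultimately have "prec xs (last xs) q" "prec xs q (last xs)"
    using assms prec_last[of q xs] by auto
  then show False using prec_asym[OF assms(1)] by blast
qed

lemma lex_le_Nil_left [simp]: "lex_le [] ys"
  unfolding lex_le_def by (cases ys) auto

lemma lex_le_Nil_right [simp]: "lex_le xs [] \<longleftrightarrow> xs = []"
  unfolding lex_le_def by auto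

lemma lex_le_Cons [simp]: "lex_le (x # xs) (y # ys) \<longleftrightarrow> x < y \<or> (x = y \<and> lex_le xs ys)"
  unfolding lex_le_def by auto

lemma lex_le_refl [simp]: "lex_le xs xs"
  by (simp add: lex_le_def)

lemma lex_le_antisym: "lex_le xs ys \<Longrightarrow> lex_le ys xs \<Longrightarrow> xs = ys"
proof (induction xs arbitrary: ys)
  case (Cons x xs)
  then show ?case by (cases ys) auto
qed simp

lemma lex_le_total: "lex_le xs ys \<or> lex_le ys xs"
proof (induction xs arbitrary: ys)
  case (Cons x xs)
  then show ?case by (cases ys) auto
qed simp

lemma lex_le_trans: "lex_le xs ys \<Longrightarrow> lex_le ys zs \<Longrightarrow> lex_le xs zs"
proof (induction xs arbitrary: ys zs)
  case (Cons x xs)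
  then obtain y ys' where y: "ys = y # ys'" by (cases ys) auto
  with Cons obtain z zs' where z: "zs = z # zs'" by (cases zs) auto
  show ?case using Cons y z by auto
qed simp

text \<open>Labels are strictly decreasing lists; for those, the lexicographic order is governed by
  the largest element in which the two labels differ.\<close>

lemma lex_le_if_subset:
  "sorted_wrt (>) xs \<Longrightarrow> sorted_wrt (>) ys \<Longrightarrow> set xs \<subseteq> set ys \<Longrightarrow> lex_le (xs::nat list) ys"
proof (induction ys arbitrary: xs)
  case Nil then show ?case by simp
next
  case (Cons y ys)
  show ?case
  proof (cases xs)
    case Nil then show ?thesis by simp
  next
    case (Cons x xs')
    have "x \<in> set (y#ys)" using Cons.prems Cons by auto
    then have "x \<le> y" using Cons.prems(2) by auto
    show ?thesis
    proof (cases "x = y")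
      case True
      have "set xs' \<subseteq> set ys" using Cons.prems Cons True by fastforce
      then have "lex_le xs' ys" using Cons.IH Cons.prems Cons by auto
      then show ?thesis using Cons True by simp
    next
      case False then show ?thesis using \<open>x \<le> y\<close> Cons by simp
    qed
  qed
qed

lemma lex_le_largest_difference:
  "sorted_wrt (>) xs \<Longrightarrow> sorted_wrt (>) ys \<Longrightarrow> lex_le (xs::nat list) ys \<Longrightarrow> xs \<noteq> ys \<Longrightarrow>
    \<exists>m\<in>set ys. m \<notin> set xs \<and> (\<forall>k>m. k \<in> set xs \<longleftrightarrow> k \<in> set ys)"
proof (induction ys arbitrary: xs)
  case Nil then show ?case by simp
next
  case (Cons y ys)
  show ?case
  proof (cases xs)
    case Nil then show ?thesis using Cons.prems by (intro bexI[of _ y]) auto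
  next
    case (Cons x xs')
    show ?thesis
    proof (cases "x < y")
      case True then show ?thesis using Cons Cons.prems
        by (intro bexI[of _ y]) auto
    next
      case False
      then have xy: "x = y" "lex_le xs' ys" "xs' \<noteq> ys" using Cons Cons.prems by auto
      then obtain m where m: "m \<in> set ys" "m \<notin> set xs'" "\<forall>k>m. k \<in> set xs' \<longleftrightarrow> k \<in> set ys"
        using Cons.IH[of xs'] Cons.prems Cons by auto
      have "m < y" using m Cons.prems by auto
      then show ?thesis using m xy Cons by (intro bexI[of _ m]) auto
    qed
  qed
qed

lemma ex_lex_le_max: "xs \<noteq> [] \<Longrightarrow> \<exists>v\<in>set xs. \<forall>w\<in>set xs. lex_le (f w) (f v)"
proof (induction xs)
  case Nil then show ?case by simp
next
  case (Cons x xs)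
  show ?case
  proof (cases "xs = []")
    case True then show ?thesis by simp
  next
    case False
    then obtain v where v: "v \<in> set xs" "\<forall>w\<in>set xs. lex_le (f w) (f v)" using Cons.IH by blast
    show ?thesis
    proof (cases "lex_le (f x) (f v)")
      case True then show ?thesis using v by auto
    next
      case False
      then have "lex_le (f v) (f x)" using lex_le_total by blast
      have "\<forall>w\<in>set xs. lex_le (f w) (f x)"
      proof
        fix w assume "w \<in> set xs"
        then have "lex_le (f w) (f v)" using v by blast
        then show "lex_le (f w) (f x)" using lex_le_trans \<open>lex_le (f v) (f x)\<close> by blast
      qed
      then show ?thesis by (intro bexI[of _ x]) auto
    qed
  qed
qed

lemma last_filter_lex_max:
  fixes f :: "'a \<Rightarrow> nat list"
  assumes "xs \<noteq> []"
  defines "M \<equiv> filter (\<lambda>v. \<forall>w\<in>set xs. lex_le (f w) (f v)) xs"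
  shows "last M \<in> set xs" "\<And>w. w \<in> set xs \<Longrightarrow> lex_le (f w) (f (last M))"
    and "\<And>y. y \<in> set xs \<Longrightarrow> f y = f (last M) \<Longrightarrow> y \<noteq> last M \<Longrightarrow> prec xs y (last M)"
proof -
  have setM: "set M = {v \<in> set xs. \<forall>w\<in>set xs. lex_le (f w) (f v)}"
    unfolding M_def by simp
  then have "M \<noteq> []" using ex_lex_le_max[OF assms(1), of f] by force
  then have "last M \<in> set M" by (rule last_in_set)
  then show "last M \<in> set xs" and max: "\<And>w. w \<in> set xs \<Longrightarrow> lex_le (f w) (f (last M))"
    using setM by blast+
  fix y assume y: "y \<in> set xs" "f y = f (last M)" "y \<noteq> last M"
  then have "y \<in> set M" using max setM by simp
  then have "prec M y (last M)" using prec_last y(3) by metis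
  then show "prec xs y (last M)" unfolding M_def prec_filter by (rule conjunct1)
qed

definition walk :: "('a \<times> 'a) set \<Rightarrow> 'a list \<Rightarrow> bool" where
  "walk E w \<longleftrightarrow> (\<forall>i. Suc i < length w \<longrightarrow> (w ! i, w ! Suc i) \<in> E)"

lemma rtrancl_leaves_set: "(a, b) \<in> R\<^sup>* \<Longrightarrow> a \<in> A \<Longrightarrow> b \<notin> A \<Longrightarrow> \<exists>x\<in>A. \<exists>y. y \<notin> A \<and> (x, y) \<in> R"
  by (induction rule: rtrancl_induct) auto

lemma nth_splice:
  "r \<le> q \<Longrightarrow> q \<le> length w \<Longrightarrow> (take r w @ drop q w) ! l = (if l < r then w ! l else w ! (l - r + q))"
  by (simp add: nth_append min_absorb2 add.commute)

lemma walk_splice: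
  assumes w: "walk E w" and r: "0 < r" "r \<le> q" "q < length w" and e: "(w ! (r - 1), w ! q) \<in> E"
  shows "walk E (take r w @ drop q w)"
  unfolding walk_def
proof (intro allI impI)
  fix i assume i: "Suc i < length (take r w @ drop q w)"
  note splice = nth_splice[of r q w, OF r(2) less_imp_le[OF r(3)]]
  consider "Suc i < r" | "Suc i = r" | "r \<le> i" by linarith
  then show "((take r w @ drop q w) ! i, (take r w @ drop q w) ! Suc i) \<in> E"
  proof cases
    case 1
    then show ?thesis using w r unfolding walk_def splice by simp
  next
    case 2
    then have "i = r - 1" by simp
    then show ?thesis using e 2 unfolding splice by simp
  next
    case 3
    then have "Suc (i - r + q) < length w" "Suc i - r + q = Suc (i - r + q)" using i r by auto
    then show ?thesis using w 3 unfolding walk_def splice by simp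
  qed
qed

lemma induced_cycle_if_chordless:
  assumes "sym E" and w: "walk E cs" "distinct cs" and close: "(cs ! 0, cs ! (length cs - 1)) \<in> E"
    and chordless: "\<And>i j. Suc i < j \<Longrightarrow> j < length cs \<Longrightarrow> (cs ! i, cs ! j) \<in> E \<Longrightarrow>
      i = 0 \<and> j = length cs - 1"
  shows "induced_cycle E cs"
proof -
  have adj: "(cs ! i, cs ! j) \<in> E \<longleftrightarrow> j = Suc i \<or> (i = 0 \<and> j = length cs - 1)"
    if "i < j" "j < length cs" for i j
    using that w close chordless[of i j] unfolding walk_def by (cases "j = Suc i") auto
  have sym_adj: "(cs ! i, cs ! j) \<in> E \<longleftrightarrow> (cs ! j, cs ! i) \<in> E" for i j
    using \<open>sym E\<close> unfolding sym_def by blast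
  have "(cs ! i, cs ! j) \<in> E \<longleftrightarrow> (j = Suc i mod length cs \<or> i = Suc j mod length cs)"
    if "i < length cs" "j < length cs" "i \<noteq> j" for i j
  proof (cases "i < j")
    case True
    then show ?thesis using adj[of i j] that by (auto simp: mod_if)
  next
    case False
    then show ?thesis using adj[of j i] sym_adj[of i j] that by (auto simp: mod_if)
  qed
  then show ?thesis unfolding induced_cycle_def using w by blast
qed

lemma walk_close_chordless:
  assumes w: "walk E w" "distinct w" and J: "J < length w" "(w ! J, d) \<in> E" "d \<notin> set (take (Suc J) w)"
    and far: "\<And>j. 0 < j \<Longrightarrow> j < J \<Longrightarrow> (w ! j, d) \<notin> E"
    and chordless: "\<And>i j. Suc i < j \<Longrightarrow> j < length w \<Longrightarrow> (w ! i, w ! j) \<notin> E"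
  defines "cs \<equiv> take (Suc J) w @ [d]"
  shows "walk E cs" "distinct cs"
    and "\<And>i j. Suc i < j \<Longrightarrow> j < length cs \<Longrightarrow> (cs ! i, cs ! j) \<in> E \<Longrightarrow> i = 0 \<and> j = length cs - 1"
proof -
  have len: "length cs = J + 2" using J unfolding cs_def by simp
  have cs_nth: "cs ! l = (if l \<le> J then w ! l else d)" if "l < J + 2" for l
    using that J unfolding cs_def by (auto simp: nth_append)
  show "walk E cs" unfolding walk_def
  proof (intro allI impI)
    fix l assume "Suc l < length cs"
    then show "(cs ! l, cs ! Suc l) \<in> E"
      using w J cs_nth[of l] cs_nth[of "Suc l"] len unfolding walk_def by (cases "l = J") auto
  qed
  show "distinct cs" using w J unfolding cs_def by simp
  show "i = 0 \<and> j = length cs - 1" if "Suc i < j" "j < length cs" "(cs ! i, cs ! j) \<in> E" for i j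
    using that chordless[of i j] far[of i] cs_nth[of i] cs_nth[of j] len J
    by (cases "j = J + 1"; cases "i = 0") auto
qed

lemma greedy_search_length: "length (greedy_search lab \<rho> k) = k"
  by (induction k) (simp_all add: Let_def)

lemma greedy_search_prefix: "k \<le> m \<Longrightarrow> greedy_search lab \<rho> k = take k (greedy_search lab \<rho> m)"
  by (induction m) (auto simp: Let_def greedy_search_length le_Suc_eq)

lemma greedy_search_Suc:
  assumes "\<not> set \<rho> \<subseteq> set (greedy_search lab \<rho> k)"
  defines "p \<equiv> greedy_search lab \<rho> k"
  obtains x where "greedy_search lab \<rho> (Suc k) = p @ [x]" "x \<in> set \<rho>" "x \<notin> set p"
    "\<And>w. w \<in> set \<rho> \<Longrightarrow> w \<notin> set p \<Longrightarrow> lex_le (lab p w) (lab p x)"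
    "\<And>y. y \<in> set \<rho> \<Longrightarrow> y \<notin> set p \<Longrightarrow> lab p y = lab p x \<Longrightarrow> y \<noteq> x \<Longrightarrow> prec \<rho> y x"
proof -
  define U where "U = filter (\<lambda>v. v \<notin> set p) \<rho>"
  define x where "x = last (filter (\<lambda>v. \<forall>w\<in>set U. lex_le (lab p w) (lab p v)) U)"
  have setU: "set U = set \<rho> - set p" unfolding U_def by auto
  then have "U \<noteq> []" using assms by auto
  note max = last_filter_lex_max[OF this, where f = "lab p", folded x_def]
  show ?thesis
  proof (rule that)
    show "greedy_search lab \<rho> (Suc k) = p @ [x]" unfolding x_def U_def p_def by (simp add: Let_def)
    show "x \<in> set \<rho>" "x \<notin> set p" using max(1) setU by auto
    show "lex_le (lab p w) (lab p x)" if "w \<in> set \<rho>" "w \<notin> set p" for w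
      using max(2) that setU by blast
    show "prec \<rho> y x" if "y \<in> set \<rho>" "y \<notin> set p" "lab p y = lab p x" "y \<noteq> x" for y
      using max(3)[of y] that setU unfolding U_def prec_filter by blast
  qed
qed

lemma not_subset_if_shorter: "distinct xs \<Longrightarrow> length ys < length xs \<Longrightarrow> \<not> set xs \<subseteq> set ys"
  by (metis card_length card_mono distinct_card finite_set leD le_less_trans)

lemma greedy_search_distinct:
  "distinct \<rho> \<Longrightarrow> k \<le> length \<rho> \<Longrightarrow> distinct (greedy_search lab \<rho> k) \<and> set (greedy_search lab \<rho> k) \<subseteq> set \<rho>"
proof (induction k)
  case (Suc k)
  have "\<not> set \<rho> \<subseteq> set (greedy_search lab \<rho> k)"
    using Suc.prems by (simp add: not_subset_if_shorter greedy_search_length)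
  then obtain x where "greedy_search lab \<rho> (Suc k) = greedy_search lab \<rho> k @ [x]" "x \<in> set \<rho>"
    "x \<notin> set (greedy_search lab \<rho> k)"
    by (rule greedy_search_Suc)
  then show ?case using Suc by simp
qed simp

lemma greedy_search_step:
  fixes lab :: "'a list \<Rightarrow> 'a \<Rightarrow> nat list"
  assumes "distinct \<rho>" "k < length \<rho>"
  defines "p \<equiv> greedy_search lab \<rho> k"
  obtains x where "greedy_search lab \<rho> (Suc k) = p @ [x]" "x \<in> set \<rho>" "x \<notin> set p"
    "\<And>w. w \<in> set \<rho> \<Longrightarrow> w \<notin> set p \<Longrightarrow> lex_le (lab p w) (lab p x)"
    "\<And>y. y \<in> set \<rho> \<Longrightarrow> y \<notin> set p \<Longrightarrow> lab p y = lab p x \<Longrightarrow> y \<noteq> x \<Longrightarrow> prec \<rho> y x"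
proof (rule greedy_search_Suc)
  show "\<not> set \<rho> \<subseteq> set (greedy_search lab \<rho> k)"
    using assms by (simp add: not_subset_if_shorter greedy_search_length)
qed (use that in \<open>auto simp: p_def\<close>)

lemma greedy_search_vertex_order:
  assumes "distinct \<rho>"
  shows "distinct (greedy_search lab \<rho> (length \<rho>))" "set (greedy_search lab \<rho> (length \<rho>)) = set \<rho>"
proof -
  show d: "distinct (greedy_search lab \<rho> (length \<rho>))"
    using greedy_search_distinct[OF assms] by blast
  have "card (set (greedy_search lab \<rho> (length \<rho>))) = card (set \<rho>)"
    using distinct_card[OF d] distinct_card[OF assms] greedy_search_length by metis
  then show "set (greedy_search lab \<rho> (length \<rho>)) = set \<rho>"
    using greedy_search_distinct[OF assms] by (simp add: card_subset_eq)
qed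

section \<open>Partition refinement\<close>

fun disjoint_classes :: "'a set list \<Rightarrow> bool" where
  "disjoint_classes [] = True"
| "disjoint_classes (C # Q) = (C \<inter> \<Union>(set Q) = {} \<and> disjoint_classes Q)"

fun class_before :: "'a set list \<Rightarrow> 'a \<Rightarrow> 'a \<Rightarrow> bool" where
  "class_before [] x y = False"
| "class_before (C # Q) x y = ((x \<in> C \<and> y \<in> \<Union>(set Q)) \<or> class_before Q x y)"

definition same_class :: "'a set list \<Rightarrow> 'a \<Rightarrow> 'a \<Rightarrow> bool" where
  "same_class Q x y \<longleftrightarrow> (\<exists>C\<in>set Q. x \<in> C \<and> y \<in> C)"

definition split_class :: "'a set \<Rightarrow> 'a set \<Rightarrow> 'a set list" where
  "split_class C S = (if C \<inter> S \<noteq> {} \<and> C - S \<noteq> {} then [C \<inter> S, C - S] else [C])"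

lemma refine_Cons: "refine (C # Q) S = split_class C S @ refine Q S"
  by (simp add: refine_def split_class_def)

lemma Union_split_class [simp]: "\<Union>(set (split_class C S)) = C"
  by (auto simp: split_class_def)

lemma Union_refine [simp]: "\<Union>(set (refine Q S)) = \<Union>(set Q)"
  by (induction Q) (auto simp: refine_Cons refine_def)

lemma disjoint_classes_append:
  "disjoint_classes (xs @ ys) \<longleftrightarrow> disjoint_classes xs \<and> disjoint_classes ys \<and> \<Union>(set xs) \<inter> \<Union>(set ys) = {}"
  by (induction xs) auto

lemma disjoint_classes_refine: "disjoint_classes Q \<Longrightarrow> disjoint_classes (refine Q S)"
proof (induction Q)
  case (Cons C Q)
  have "disjoint_classes (split_class C S)" by (auto simp: split_class_def)
  then show ?case using Cons by (auto simp: refine_Cons disjoint_classes_append)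
qed (simp add: refine_def)

lemma foldl_refine_partition:
  "disjoint_classes Q \<Longrightarrow> disjoint_classes (foldl refine Q Ss) \<and> \<Union>(set (foldl refine Q Ss)) = \<Union>(set Q)"
  by (induction Ss arbitrary: Q) (simp_all add: disjoint_classes_refine)

lemma class_before_append:
  "class_before (A @ B) x y \<longleftrightarrow> class_before A x y \<or> (x \<in> \<Union>(set A) \<and> y \<in> \<Union>(set B)) \<or> class_before B x y"
  by (induction A) auto

lemma same_class_Cons: "same_class (C # Q) x y \<longleftrightarrow> (x \<in> C \<and> y \<in> C) \<or> same_class Q x y"
  unfolding same_class_def by auto

lemma class_before_refine: "class_before Q x y \<Longrightarrow> class_before (refine Q S) x y"
  by (induction Q) (auto simp: refine_Cons class_before_append)

lemma class_before_refine_split: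
  "same_class Q x y \<Longrightarrow> x \<in> S \<Longrightarrow> y \<notin> S \<Longrightarrow> class_before (refine Q S) x y"
proof (induction Q)
  case (Cons C Q)
  show ?case
  proof (cases "x \<in> C \<and> y \<in> C")
    case True
    then have "class_before (split_class C S) x y" using Cons.prems by (auto simp: split_class_def)
    then show ?thesis unfolding refine_Cons class_before_append by simp
  next
    case False
    then have "same_class Q x y" using Cons.prems unfolding same_class_Cons by blast
    then show ?thesis using Cons unfolding refine_Cons class_before_append by simp
  qed
qed (simp add: same_class_def)

lemma same_class_refine: "same_class Q x y \<Longrightarrow> (x \<in> S \<longleftrightarrow> y \<in> S) \<Longrightarrow> same_class (refine Q S) x y"
proof (induction Q)
  case (Cons C Q)
  show ?case
  proof (cases "x \<in> C \<and> y \<in> C")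
    case True
    then have "same_class (split_class C S) x y"
      using Cons.prems by (auto simp: split_class_def same_class_def)
    then show ?thesis unfolding refine_Cons same_class_def by auto
  next
    case False
    then show ?thesis using Cons unfolding same_class_Cons refine_Cons same_class_def by auto
  qed
qed (simp add: same_class_def)

lemma foldl_refine_first_separator:
  assumes "same_class Q x y"
    and first: "\<And>k. k < length Ss \<Longrightarrow> y \<in> Ss ! k \<Longrightarrow> x \<notin> Ss ! k \<Longrightarrow> \<exists>j<k. x \<in> Ss ! j \<and> y \<notin> Ss ! j"
  shows "same_class (foldl refine Q Ss) x y \<or> class_before (foldl refine Q Ss) x y"
proof -
  let ?sep = "\<lambda>S. (x \<in> S) \<noteq> (y \<in> S)"
  have "((\<forall>S\<in>set Ss. \<not> ?sep S) \<longrightarrow> same_class (foldl refine Q Ss) x y) \<and>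
        ((\<exists>S\<in>set Ss. ?sep S) \<longrightarrow> class_before (foldl refine Q Ss) x y)"
    using first
  proof (induction Ss rule: rev_induct)
    case Nil
    then show ?case using assms(1) by simp
  next
    case (snoc S Ss)
    have IH: "((\<forall>S\<in>set Ss. \<not> ?sep S) \<longrightarrow> same_class (foldl refine Q Ss) x y) \<and>
        ((\<exists>S\<in>set Ss. ?sep S) \<longrightarrow> class_before (foldl refine Q Ss) x y)"
    proof (rule snoc.IH)
      fix k assume k: "k < length Ss" "y \<in> Ss ! k" "x \<notin> Ss ! k"
      obtain j where "j < k" "x \<in> (Ss @ [S]) ! j" "y \<notin> (Ss @ [S]) ! j"
        using snoc.prems[of k] k by (auto simp: nth_append)
      then show "\<exists>j<k. x \<in> Ss ! j \<and> y \<notin> Ss ! j" using k(1) by (auto simp: nth_append)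
    qed
    show ?case
    proof (cases "\<exists>S\<in>set Ss. ?sep S")
      case True
      then have "class_before (foldl refine Q Ss) x y" using IH by blast
      then have "class_before (foldl refine Q (Ss @ [S])) x y" by (simp add: class_before_refine)
      then show ?thesis using True by auto
    next
      case False
      have "x \<in> S" "y \<notin> S" if "?sep S"
      proof -
        have "\<not> (y \<in> S \<and> x \<notin> S)"
        proof
          assume "y \<in> S \<and> x \<notin> S"
          then have "\<exists>j<length Ss. x \<in> Ss ! j \<and> y \<notin> Ss ! j"
            using snoc.prems[of "length Ss"] by (simp add: nth_append cong: conj_cong)
          then show False using False nth_mem by blast
        qed
        then show "x \<in> S" "y \<notin> S" using that by auto
      qed
      moreover have "same_class (foldl refine Q Ss) x y" using IH False by blast
      ultimately show ?thesis
        using False class_before_refine_split[of "foldl refine Q Ss" x y S]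
          same_class_refine[of "foldl refine Q Ss" x y S]
        by (cases "?sep S") simp_all
    qed
  qed
  then show ?thesis by blast
qed

definition flatten_classes :: "'a list \<Rightarrow> 'a set list \<Rightarrow> 'a list" where
  "flatten_classes xs Q = concat (map (\<lambda>C. filter (\<lambda>v. v \<in> C) xs) Q)"

lemma flatten_classes_Cons: "flatten_classes xs (C # Q) = filter (\<lambda>v. v \<in> C) xs @ flatten_classes xs Q"
  by (simp add: flatten_classes_def)

lemma set_flatten_classes: "set (flatten_classes xs Q) = set xs \<inter> \<Union>(set Q)"
  by (induction Q) (auto simp: flatten_classes_def)

lemma distinct_flatten_classes: "distinct xs \<Longrightarrow> disjoint_classes Q \<Longrightarrow> distinct (flatten_classes xs Q)"
  by (induction Q) (auto simp: flatten_classes_Cons set_flatten_classes flatten_classes_def)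

lemma prec_flatten_classes_before:
  "class_before Q x y \<Longrightarrow> x \<in> set xs \<Longrightarrow> y \<in> set xs \<Longrightarrow> prec (flatten_classes xs Q) x y"
  by (induction Q) (auto simp: flatten_classes_Cons prec_append set_flatten_classes)

lemma prec_flatten_classes_same:
  "same_class Q x y \<Longrightarrow> prec xs x y \<Longrightarrow> prec (flatten_classes xs Q) x y"
proof (induction Q)
  case (Cons C Q)
  then show ?case
    by (cases "x \<in> C \<and> y \<in> C") (auto simp: same_class_Cons flatten_classes_Cons prec_append prec_filter)
qed (simp add: same_class_def)

lemma bfs_order_exists:
  assumes "finite V" "s \<in> V"
    and cut: "\<And>A. s \<in> A \<Longrightarrow> A \<subset> V \<Longrightarrow> \<exists>x\<in>A. \<exists>w\<in>V - A. (x, w) \<in> H"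
  shows "\<exists>b. is_bfs_order V H s b"
proof -
  define P where "P p i = (\<lambda>x. \<exists>w\<in>V - set (take i p). (x, w) \<in> H)" for p :: "'a list" and i
  define bfs_prefix where "bfs_prefix p \<longleftrightarrow> distinct p \<and> set p \<subseteq> V \<and> p ! 0 = s \<and>
      (\<forall>i. 0 < i \<and> i < length p \<longrightarrow> (hd (filter (P p i) (take i p)), p ! i) \<in> H)" for p
  have "\<exists>p. length p = k \<and> bfs_prefix p" if "1 \<le> k" "k \<le> card V" for k
    using that
  proof (induction k rule: nat_induct_at_least)
    case base
    then show ?case using assms(2) by (intro exI[of _ "[s]"]) (auto simp: bfs_prefix_def)
  next
    case (Suc k)
    then obtain p where p: "length p = k" "bfs_prefix p" by auto
    then have "s \<in> set p" "set p \<subset> V"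
      using Suc.hyps Suc.prems distinct_card[of p] unfolding bfs_prefix_def
      by (auto intro!: nth_mem)
    then obtain x where "x \<in> set p" "P p k x" using cut[of "set p"] p(1) unfolding P_def by auto
    then have "filter (P p k) p \<noteq> []" by (auto simp: filter_empty_conv)
    then have "hd (filter (P p k) p) \<in> set (filter (P p k) p)" by (rule hd_in_set)
    then have "P p k (hd (filter (P p k) p))" by simp
    then obtain w where w: "w \<in> V - set p" "(hd (filter (P p k) p), w) \<in> H"
      unfolding P_def using p(1) by auto
    have "P (p @ [w]) i = P p i" if "i \<le> k" for i
      using that p(1) unfolding P_def by simp
    then have "bfs_prefix (p @ [w])"
      using p w Suc.hyps unfolding bfs_prefix_def
      by (auto simp: nth_append less_Suc_eq)
    then show ?case using p(1) by (intro exI[of _ "p @ [w]"]) simp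
  qed
  then obtain b where b: "length b = card V" "bfs_prefix b"
    using assms(1,2) card_gt_0_iff[of V] by (metis One_nat_def Suc_leI empty_iff order_refl)
  then have "set b = V"
    using distinct_card[of b] assms(1) unfolding bfs_prefix_def by (simp add: card_subset_eq)
  then have "is_bfs_order V H s b"
    using b assms(2) unfolding is_bfs_order_def vertex_order_def bfs_prefix_def P_def Let_def by auto
  then show ?thesis ..
qed

lemma bfs_order_earlier_nbr:
  assumes "is_bfs_order V H s b" "0 < i" "i < length b"
    and "\<exists>x\<in>set (take i b). \<exists>w\<in>V - set (take i b). (x, w) \<in> H"
  shows "\<exists>x\<in>set (take i b). (x, b ! i) \<in> H"
proof -
  define P where "P x \<longleftrightarrow> (\<exists>w\<in>V - set (take i b). (x, w) \<in> H)" for x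
  have "filter P (take i b) \<noteq> []" using assms(4) unfolding P_def by (auto simp: filter_empty_conv)
  then have "hd (filter P (take i b)) \<in> set (filter P (take i b))" by (rule hd_in_set)
  moreover have "(hd (filter P (take i b)), b ! i) \<in> H"
    using assms(1-3) unfolding is_bfs_order_def P_def Let_def by auto
  ultimately show ?thesis by auto
qed

definition ltree_parent :: "('a \<times> 'a) set \<Rightarrow> 'a list \<Rightarrow> 'a \<Rightarrow> 'a \<Rightarrow> bool" where
  "ltree_parent E xs c p \<longleftrightarrow> (p, c) \<in> E \<and> prec xs p c \<and> (\<forall>z. prec xs p z \<and> prec xs z c \<longrightarrow> (z, c) \<notin> E)"

lemma ltree_parent_nth:
  assumes "distinct xs" "i < length xs" "j < i"
  shows "ltree_parent E xs (xs ! i) (xs ! j) \<longleftrightarrow>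
    (xs ! j, xs ! i) \<in> E \<and> (\<forall>k. j < k \<and> k < i \<longrightarrow> (xs ! k, xs ! i) \<notin> E)"
proof -
  have "(\<forall>z. prec xs (xs ! j) z \<and> prec xs z (xs ! i) \<longrightarrow> (z, xs ! i) \<notin> E) \<longleftrightarrow>
      (\<forall>k. j < k \<and> k < i \<longrightarrow> (xs ! k, xs ! i) \<notin> E)"
  proof
    assume "\<forall>z. prec xs (xs ! j) z \<and> prec xs z (xs ! i) \<longrightarrow> (z, xs ! i) \<notin> E"
    then show "\<forall>k. j < k \<and> k < i \<longrightarrow> (xs ! k, xs ! i) \<notin> E"
      using assms prec_nth[OF assms(1)] by auto
  next
    assume h: "\<forall>k. j < k \<and> k < i \<longrightarrow> (xs ! k, xs ! i) \<notin> E"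
    show "\<forall>z. prec xs (xs ! j) z \<and> prec xs z (xs ! i) \<longrightarrow> (z, xs ! i) \<notin> E"
    proof (intro allI impI)
      fix z assume z: "prec xs (xs ! j) z \<and> prec xs z (xs ! i)"
      then obtain k where "k < length xs" "xs ! k = z" by (metis in_set_conv_nth prec_in_set)
      then show "(z, xs ! i) \<notin> E" using h z assms prec_nth[OF assms(1)] by auto
    qed
  qed
  then show ?thesis unfolding ltree_parent_def using assms prec_nth[OF assms(1)] by auto
qed

lemma ltree_iff_ltree_parent:
  assumes "distinct xs"
  shows "(u, v) \<in> ltree E xs \<longleftrightarrow> ltree_parent E xs u v \<or> ltree_parent E xs v u"
proof
  assume "(u, v) \<in> ltree E xs"
  then obtain i j where "i < length xs" "j < i" "(xs ! j, xs ! i) \<in> E"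
    "\<forall>k. j < k \<and> k < i \<longrightarrow> (xs ! k, xs ! i) \<notin> E" "(u, v) = (xs ! i, xs ! j) \<or> (u, v) = (xs ! j, xs ! i)"
    unfolding ltree_def by blast
  then show "ltree_parent E xs u v \<or> ltree_parent E xs v u"
    using ltree_parent_nth[OF assms] by auto
next
  assume "ltree_parent E xs u v \<or> ltree_parent E xs v u"
  then obtain c p where cp: "ltree_parent E xs c p" "(u, v) = (c, p) \<or> (u, v) = (p, c)" by blast
  then obtain j i where "j < i" "i < length xs" "xs ! j = p" "xs ! i = c"
    unfolding ltree_parent_def prec_def by blast
  then show "(u, v) \<in> ltree E xs"
    using ltree_parent_nth[OF assms] cp unfolding ltree_def by blast
qed

section \<open>LexDFS orders\<close>

locale lexdfs_order =
  fixes V :: "'a set" and E :: "('a \<times> 'a) set" and s :: 'a and \<sigma> :: "'a list"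
  assumes graph: "graph V E" and lexdfs: "is_lexdfs_order V E s \<sigma>"
begin

abbreviation before :: "'a \<Rightarrow> 'a \<Rightarrow> bool" (infix \<open>\<prec>\<close> 50)
  where "u \<prec> v \<equiv> prec \<sigma> u v"

abbreviation n :: nat where "n \<equiv> length \<sigma>"

lemma finite_V: "finite V"
  and edge_sym: "(u, v) \<in> E \<Longrightarrow> (v, u) \<in> E"
  and edge_irrefl: "(v, v) \<notin> E"
  and connected: "u \<in> V \<Longrightarrow> v \<in> V \<Longrightarrow> (u, v) \<in> E\<^sup>*"
  and edge_in_V: "(u, v) \<in> E \<Longrightarrow> u \<in> V \<and> v \<in> V"
  using graph unfolding graph_def sym_def by auto

lemma sigma_distinct: "distinct \<sigma>" and set_sigma: "set \<sigma> = V" and s_in_V: "s \<in> V"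
  using lexdfs unfolding is_lexdfs_order_def vertex_order_def by auto

lemma card_V: "card V = n"
  using distinct_card[OF sigma_distinct] set_sigma by simp

definition idx :: "'a \<Rightarrow> nat" where "idx v = (THE i. i < n \<and> \<sigma> ! i = v)"

lemma idx_spec: "v \<in> V \<Longrightarrow> idx v < n \<and> \<sigma> ! idx v = v"
proof -
  assume "v \<in> V"
  then obtain i where i: "i < n" "\<sigma> ! i = v" using set_sigma by (auto simp: in_set_conv_nth)
  have "idx v = i" unfolding idx_def
    using i sigma_distinct by (auto intro!: the_equality simp: nth_eq_iff_index_eq)
  then show ?thesis using i by simp
qed

lemma idx_nth [simp]: "i < n \<Longrightarrow> idx (\<sigma> ! i) = i"
  using idx_spec[of "\<sigma> ! i"] sigma_distinct set_sigma by (auto simp: nth_eq_iff_index_eq)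

lemma nth_in_V [simp]: "i < n \<Longrightarrow> \<sigma> ! i \<in> V"
  using set_sigma by auto

lemma before_iff_idx: "u \<prec> v \<longleftrightarrow> u \<in> V \<and> v \<in> V \<and> idx u < idx v"
proof
  assume "u \<prec> v"
  then obtain i j where "i < j" "j < n" "\<sigma> ! i = u" "\<sigma> ! j = v" unfolding prec_def by blast
  then show "u \<in> V \<and> v \<in> V \<and> idx u < idx v" by auto
next
  assume "u \<in> V \<and> v \<in> V \<and> idx u < idx v"
  then show "u \<prec> v" unfolding prec_def using idx_spec by blast
qed

lemma in_take_iff_idx: "v \<in> V \<Longrightarrow> v \<in> set (take i \<sigma>) \<longleftrightarrow> idx v < i"
  by (metis idx_spec idx_nth in_set_conv_nth length_take min_less_iff_conj nth_take)

lemma before_total: "u \<in> V \<Longrightarrow> v \<in> V \<Longrightarrow> u \<noteq> v \<Longrightarrow> u \<prec> v \<or> v \<prec> u"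
  using prec_total set_sigma by metis

lemma ldfs_label_take:
  "i \<le> n \<Longrightarrow> ldfs_label E s (take i \<sigma>) v =
    rev (map Suc (filter (\<lambda>j. (\<sigma> ! j, v) \<in> E) [0..<i])) @ (if v = s then [0] else [])"
proof -
  assume "i \<le> n"
  have "[Suc j. j \<leftarrow> [0..<k], Q j] = map Suc (filter Q [0..<k])" for k and Q :: "nat \<Rightarrow> bool"
    by (induction k) auto
  moreover have "filter (\<lambda>j. (take i \<sigma> ! j, v) \<in> E) [0..<i] = filter (\<lambda>j. (\<sigma> ! j, v) \<in> E) [0..<i]"
    by (rule filter_cong) auto
  ultimately show ?thesis unfolding ldfs_label_def using \<open>i \<le> n\<close> by (simp add: min_absorb2)
qed

lemma lexdfs_max_label: "i < n \<Longrightarrow> w \<in> V \<Longrightarrow> w \<notin> set (take i \<sigma>) \<Longrightarrow>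
   lex_le (ldfs_label E s (take i \<sigma>) w) (ldfs_label E s (take i \<sigma>) (\<sigma> ! i))"
  using lexdfs unfolding is_lexdfs_order_def by auto

lemma n_pos: "0 < n"
  using s_in_V set_sigma by (cases \<sigma>) auto

lemma sigma_first: "\<sigma> ! 0 = s"
proof (rule ccontr)
  assume "\<sigma> ! 0 \<noteq> s"
  then have "lex_le [0] []" using lexdfs_max_label[of 0 s] n_pos s_in_V ldfs_label_take[of 0] by simp
  then show False by simp
qed

lemma idx_s [simp]: "idx s = 0"
  using sigma_first n_pos idx_nth by fastforce

lemma idx_pos: "v \<in> V \<Longrightarrow> v \<noteq> s \<Longrightarrow> 0 < idx v"
  using idx_spec sigma_first by (metis gr0I)

lemma nth_not_s: "1 \<le> i \<Longrightarrow> i < n \<Longrightarrow> \<sigma> ! i \<noteq> s"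
  using idx_nth idx_s by (metis not_one_le_zero)

lemma ldfs_label_after_s:
  "0 < i \<Longrightarrow> i \<le> n \<Longrightarrow> v \<notin> set (take i \<sigma>) \<Longrightarrow>
    ldfs_label E s (take i \<sigma>) v = rev (map Suc (filter (\<lambda>j. (\<sigma> ! j, v) \<in> E) [0..<i]))"
  using ldfs_label_take in_take_iff_idx[OF s_in_V] by auto

text \<open>The four-point condition characterising LexDFS orders (Corneil and Krueger).\<close>

lemma four_point:
  assumes ab: "a \<prec> b" and bc: "b \<prec> c" and ac: "(a, c) \<in> E" and nab: "(a, b) \<notin> E"
  shows "\<exists>d. a \<prec> d \<and> d \<prec> b \<and> (d, b) \<in> E \<and> (d, c) \<notin> E"
proof -
  define i where "i = idx b"
  have V: "a \<in> V" "b \<in> V" "c \<in> V" and ia: "idx a < i" and ic: "i < idx c"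
    using ab bc before_iff_idx i_def by auto
  have i: "0 < i" "i < n" using ia ic idx_spec[OF V(3)] by auto
  have cn: "c \<notin> set (take i \<sigma>)" "b \<notin> set (take i \<sigma>)" using in_take_iff_idx V ic i_def by auto
  define xs where "xs = rev (map Suc (filter (\<lambda>j. (\<sigma> ! j, c) \<in> E) [0..<i]))"
  define ys where "ys = rev (map Suc (filter (\<lambda>j. (\<sigma> ! j, b) \<in> E) [0..<i]))"
  have "lex_le xs ys"
    using lexdfs_max_label[OF i(2) V(3) cn(1)] ldfs_label_after_s[OF i(1) _ cn(1)]
      ldfs_label_after_s[OF i(1) _ cn(2)] i idx_spec[OF V(2)]
    unfolding xs_def ys_def i_def by simp
  moreover have sorted: "sorted_wrt (>) xs" "sorted_wrt (>) ys"
    unfolding xs_def ys_def by (simp_all add: sorted_wrt_rev sorted_wrt_map sorted_wrt_filter)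
  moreover have ain: "Suc (idx a) \<in> set xs" "Suc (idx a) \<notin> set ys"
    using ia ac nab idx_spec[OF V(1)] unfolding xs_def ys_def by auto
  ultimately obtain m where m: "m \<in> set ys" "m \<notin> set xs" "\<forall>k>m. k \<in> set xs \<longleftrightarrow> k \<in> set ys"
    using lex_le_largest_difference by blast
  \<comment> \<open>the largest number in which the two labels differ is that of the wanted vertex d\<close>
  obtain m' where m': "m = Suc m'" "m' < i" "(\<sigma> ! m', b) \<in> E" "(\<sigma> ! m', c) \<notin> E"
    using m(1,2) unfolding xs_def ys_def by auto
  have "Suc (idx a) \<le> m" using m(3) ain by (meson not_less)
  then have "idx a < m'" using m'(1) m(2) ain(1) by (cases "Suc (idx a) = m") auto
  then show ?thesis
    using m' i by (intro exI[of _ "\<sigma> ! m'"]) (auto simp: before_iff_idx V i_def)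
qed

lemma earlier_neighbour: "0 < i \<Longrightarrow> i < n \<Longrightarrow> \<exists>j<i. (\<sigma> ! j, \<sigma> ! i) \<in> E"
proof (rule ccontr)
  assume i: "0 < i" "i < n" and no: "\<not> (\<exists>j<i. (\<sigma> ! j, \<sigma> ! i) \<in> E)"
  have "s \<in> set (take i \<sigma>)" "\<sigma> ! i \<notin> set (take i \<sigma>)"
    using in_take_iff_idx[OF s_in_V] in_take_iff_idx i by auto
  then obtain a b where ab: "a \<in> set (take i \<sigma>)" "b \<notin> set (take i \<sigma>)" "(a, b) \<in> E"
    using rtrancl_leaves_set[OF connected[OF s_in_V nth_in_V[OF i(2)]]] by blast
  have bV: "b \<in> V" and ia: "idx a < i" using ab edge_in_V in_take_iff_idx by auto
  have "Suc (idx a) \<in> set (ldfs_label E s (take i \<sigma>) b)"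
    using ldfs_label_after_s[OF i(1) _ ab(2)] i ia ab(3) idx_spec[of a] edge_in_V[OF ab(3)] by auto
  moreover have "ldfs_label E s (take i \<sigma>) (\<sigma> ! i) = []"
    using ldfs_label_after_s[OF i(1), of "\<sigma> ! i"] i no in_take_iff_idx by auto
  ultimately show False using lexdfs_max_label[OF i(2) bV ab(2)] by auto
qed

text \<open>Chordal graphs have no high paths (no_high_path); for paths of length 3 this says that the
  earlier neighbours of every vertex form a clique.\<close>

definition high_path :: "'a \<Rightarrow> 'a \<Rightarrow> 'a list \<Rightarrow> bool" where
  "high_path a b w \<longleftrightarrow> w \<noteq> [] \<and> w ! 0 = a \<and> w ! (length w - 1) = b \<and> a \<prec> b \<and> (a, b) \<notin> E
     \<and> walk E w \<and> (\<forall>i. 0 < i \<and> i < length w - 1 \<longrightarrow> b \<prec> w ! i)"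

lemma high_path_splice:
  assumes hp: "high_path a b w" and r: "0 < r" "r \<le> q" "q < length w" and e: "(w ! (r - 1), w ! q) \<in> E"
  shows "high_path a b (take r w @ drop q w)"
proof -
  note splice = nth_splice[of r q w, OF r(2) less_imp_le[OF r(3)]]
  have len: "length (take r w @ drop q w) = r + (length w - q)" using r by simp
  have "b \<prec> (take r w @ drop q w) ! i" if "0 < i" "i < length (take r w @ drop q w) - 1" for i
  proof (cases "i < r")
    case False
    then have "0 < i - r + q" "i - r + q < length w - 1" using that r len by auto
    then show ?thesis using hp False unfolding high_path_def splice by auto
  qed (use hp that r len in \<open>auto simp: high_path_def splice\<close>)
  then show ?thesis
    using hp walk_splice[OF _ r e] r unfolding high_path_def len splice by auto
qed

lemma high_path_length: "high_path a b w \<Longrightarrow> 3 \<le> length w"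
proof (rule ccontr)
  assume hp: "high_path a b w" and "\<not> 3 \<le> length w"
  moreover have "w \<noteq> []" using hp unfolding high_path_def by blast
  ultimately have "length w = 1 \<or> length w = 2" by (cases "length w") auto
  then show False
    using hp prec_irrefl[OF sigma_distinct] unfolding high_path_def walk_def
    by (auto simp: numeral_2_eq_2)
qed

lemma minimal_high_path_chordless:
  assumes hp: "high_path a b w" and min: "\<forall>w'. high_path a b w' \<longrightarrow> length w \<le> length w'"
    and ij: "Suc i < j" "j < length w"
  shows "(w ! i, w ! j) \<notin> E"
proof
  assume "(w ! i, w ! j) \<in> E"
  then have "high_path a b (take (Suc i) w @ drop j w)"
    using high_path_splice[OF hp, of "Suc i" j] ij by simp
  moreover have "length (take (Suc i) w @ drop j w) < length w" using ij by simp
  ultimately show False using min by fastforce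
qed

lemma minimal_high_path_distinct:
  assumes hp: "high_path a b w" and min: "\<forall>w'. high_path a b w' \<longrightarrow> length w \<le> length w'"
  shows "distinct w"
proof -
  have walk: "walk E w" using hp high_path_def by blast
  have "w ! i \<noteq> w ! j" if ij: "i < j" "j < length w" for i j
  proof
    assume eq: "w ! i = w ! j"
    \<comment> \<open>cut out the closed subwalk between the two occurrences\<close>
    obtain r q where rq: "0 < r" "r \<le> q" "q < length w" "(w ! (r - 1), w ! q) \<in> E"
      "r + (length w - q) < length w"
    proof (cases "i = 0")
      case True
      have "j \<noteq> length w - 1"
        using hp eq True prec_irrefl[OF sigma_distinct] unfolding high_path_def by auto
      then have "Suc j < length w" using ij by simp
      moreover have "(w ! (1 - 1), w ! Suc j) \<in> E"
        using walk eq True calculation unfolding walk_def by simp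
      ultimately show ?thesis using that[of 1 "Suc j"] ij True by simp
    next
      case False
      then have "(w ! (i - 1), w ! j) \<in> E"
        using walk eq ij unfolding walk_def by (metis Suc_pred' bot_nat_0.not_eq_extremum less_trans)
      then show ?thesis using that[of i j] ij False by auto
    qed
    then have "high_path a b (take r w @ drop q w)" using high_path_splice[OF hp] by blast
    moreover have "length (take r w @ drop q w) < length w" using rq by simp
    ultimately show False using min by fastforce
  qed
  then show ?thesis unfolding distinct_conv_nth by (metis linorder_neqE_nat)
qed

lemma walk_in_V: "walk E w \<Longrightarrow> 2 \<le> length w \<Longrightarrow> set w \<subseteq> V"
proof
  fix x assume walk: "walk E w" and "2 \<le> length w" and "x \<in> set w"
  then obtain i where i: "i < length w" "w ! i = x" "0 < length w - 1" by (auto simp: in_set_conv_nth)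
  consider "Suc i < length w" | "Suc (i - 1) = i" "Suc (i - 1) < length w" using i by linarith
  then show "x \<in> V"
  proof cases
    case 1
    then have "(w ! i, w ! Suc i) \<in> E" using walk unfolding walk_def by blast
    then show ?thesis using edge_in_V i(2) by blast
  next
    case 2
    then have "(w ! (i - 1), w ! i) \<in> E" using walk unfolding walk_def by metis
    then show ?thesis using edge_in_V i(2) by blast
  qed
qed

text \<open>In a shortest high path from a to b with second vertex c, apply the four-point condition to
  a, b, c; the resulting vertex d, followed back along the path to its first neighbour there,
  closes a chordless walk from a to d.\<close>

lemma minimal_high_path_shortcut:
  assumes hp: "high_path a b w" and min: "\<forall>w'. high_path a b w' \<longrightarrow> length w \<le> length w'"
  obtains d cs where "a \<prec> d" "d \<prec> b" "cs ! 0 = a" "cs ! (length cs - 1) = d" "3 < length cs"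
    "walk E cs" "distinct cs" "\<And>i. 0 < i \<Longrightarrow> i < length cs - 1 \<Longrightarrow> d \<prec> cs ! i"
    "\<And>i j. Suc i < j \<Longrightarrow> j < length cs \<Longrightarrow> (cs ! i, cs ! j) \<in> E \<Longrightarrow> i = 0 \<and> j = length cs - 1"
proof -
  have l3: "3 \<le> length w" using high_path_length[OF hp] .
  have walk: "walk E w" and w0: "w ! 0 = a" and wl: "w ! (length w - 1) = b" and ab: "a \<prec> b"
    and nab: "(a, b) \<notin> E" and inner: "\<And>i. 0 < i \<Longrightarrow> i < length w - 1 \<Longrightarrow> b \<prec> w ! i"
    using hp unfolding high_path_def by auto
  have chordless: "\<And>i j. Suc i < j \<Longrightarrow> j < length w \<Longrightarrow> (w ! i, w ! j) \<notin> E"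
    by (rule minimal_high_path_chordless[OF hp min])
  have "b \<prec> w ! 1" "(a, w ! 1) \<in> E" using inner[of 1] walk l3 w0 unfolding walk_def by auto
  then obtain d where d: "a \<prec> d" "d \<prec> b" "(d, b) \<in> E" "(d, w ! 1) \<notin> E"
    using four_point[OF ab _ _ nab] by blast
  define J where "J = (LEAST j. 1 \<le> j \<and> j < length w \<and> (d, w ! j) \<in> E)"
  have "1 \<le> length w - 1" "length w - 1 < length w" using l3 by linarith+
  then have "1 \<le> length w - 1 \<and> length w - 1 < length w \<and> (d, w ! (length w - 1)) \<in> E"
    using wl d(3) by simp
  then have J: "1 \<le> J" "J < length w" "(d, w ! J) \<in> E"
    using LeastI[of "\<lambda>j. 1 \<le> j \<and> j < length w \<and> (d, w ! j) \<in> E"] unfolding J_def by blast+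
  have J_min: "(w ! j, d) \<notin> E" if "0 < j" "j < J" for j
    using that J(2) not_less_Least[of j "\<lambda>j. 1 \<le> j \<and> j < length w \<and> (d, w ! j) \<in> E"] edge_sym
    unfolding J_def by auto
  have J2: "2 \<le> J" using J d(4) by (cases "J = 1") auto
  have d_before: "d \<prec> w ! l" if "1 \<le> l" "l \<le> J" for l
  proof (cases "l < length w - 1")
    case True
    then show ?thesis using inner[of l] that prec_trans[OF sigma_distinct d(2)] by simp
  next
    case False
    then have "l = length w - 1" using that J(2) by simp
    then show ?thesis using wl d(2) by simp
  qed
  have "d \<notin> set (take (Suc J) w)"
  proof
    assume "d \<in> set (take (Suc J) w)"
    then obtain l where "l < Suc J" "w ! l = d" using J by (auto simp: in_set_conv_nth)
    then show False
      using w0 d(1) d_before[of l] prec_irrefl[OF sigma_distinct] by (cases "l = 0") auto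
  qed
  note cs = walk_close_chordless[OF walk minimal_high_path_distinct[OF hp min] J(2) edge_sym[OF J(3)]
      this J_min chordless]
  define cs where "cs = take (Suc J) w @ [d]"
  have len: "length cs = J + 2" using J unfolding cs_def by simp
  show thesis
  proof (rule that[of d cs])
    show "cs ! 0 = a" "cs ! (length cs - 1) = d" "3 < length cs"
      using len w0 J2 unfolding cs_def by (auto simp: nth_append)
    show "d \<prec> cs ! i" if "0 < i" "i < length cs - 1" for i
      using that d_before[of i] len unfolding cs_def by (simp add: nth_append)
  qed (use d cs in \<open>simp_all add: cs_def\<close>)
qed

subsection \<open>The L-tree of a LexDFS order\<close>

text \<open>The rightmost earlier neighbour; meaningless for s, which has none.\<close>

definition parent :: "'a \<Rightarrow> 'a" where
  "parent v = \<sigma> ! (GREATEST j. j < idx v \<and> (\<sigma> ! j, v) \<in> E)"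

lemma parent:
  assumes v: "v \<in> V" "v \<noteq> s"
  shows "(parent v, v) \<in> E" "parent v \<prec> v" "parent v \<in> V"
    and "\<And>z. parent v \<prec> z \<Longrightarrow> z \<prec> v \<Longrightarrow> (z, v) \<notin> E"
proof -
  define P where "P j \<longleftrightarrow> j < idx v \<and> (\<sigma> ! j, v) \<in> E" for j
  have i: "idx v < n" "\<sigma> ! idx v = v" "0 < idx v" using idx_spec[OF v(1)] idx_pos[OF v] by auto
  obtain j0 where "P j0" using earlier_neighbour[OF i(3) i(1)] i unfolding P_def by auto
  have bound: "\<forall>y. P y \<longrightarrow> y \<le> idx v" unfolding P_def by simp
  define jm where "jm = (GREATEST j. P j)"
  have jm: "jm < idx v" "(\<sigma> ! jm, v) \<in> E"
    using GreatestI_nat[of P j0 "idx v"] \<open>P j0\<close> bound unfolding jm_def P_def by blast+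
  have jmax: "j \<le> jm" if "P j" for j
    using Greatest_le_nat[of P j "idx v"] that bound unfolding jm_def by blast
  have pv: "parent v = \<sigma> ! jm" unfolding parent_def jm_def P_def ..
  show "(parent v, v) \<in> E" "parent v \<in> V" using pv jm i by auto
  show "parent v \<prec> v" using pv jm i prec_nth[OF sigma_distinct] by (metis order.strict_trans)
  fix z assume z: "parent v \<prec> z" "z \<prec> v"
  show "(z, v) \<notin> E"
  proof
    assume "(z, v) \<in> E"
    moreover have "z \<in> V" "idx z < idx v" using z(2) before_iff_idx by auto
    ultimately have "P (idx z)" using idx_spec unfolding P_def by auto
    then have "idx z \<le> jm" by (rule jmax)
    moreover have "jm < idx z" using z(1) before_iff_idx pv jm i by (metis idx_nth order.strict_trans)
    ultimately show False by simp
  qed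
qed

lemma ltree_parent_iff_parent: "ltree_parent E \<sigma> c p \<longleftrightarrow> c \<in> V \<and> c \<noteq> s \<and> p = parent c"
proof
  assume h: "ltree_parent E \<sigma> c p"
  then have e: "(p, c) \<in> E" and pc: "p \<prec> c" and nz: "\<And>z. p \<prec> z \<Longrightarrow> z \<prec> c \<Longrightarrow> (z, c) \<notin> E"
    unfolding ltree_parent_def by auto
  have cV: "c \<in> V" "p \<in> V" and cs: "c \<noteq> s" using e edge_in_V pc before_iff_idx by auto
  note P = parent[OF cV(1) cs]
  have "p = parent c"
  proof (rule ccontr)
    assume "p \<noteq> parent c"
    then have "p \<prec> parent c \<or> parent c \<prec> p" using before_total cV P(3) by blast
    then show False using nz P(1,2) P(4) pc e by blast
  qed
  then show "c \<in> V \<and> c \<noteq> s \<and> p = parent c" using cV cs by simp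
next
  assume "c \<in> V \<and> c \<noteq> s \<and> p = parent c"
  then show "ltree_parent E \<sigma> c p" unfolding ltree_parent_def using parent[of c] by blast
qed

abbreviation T :: "('a \<times> 'a) set" where "T \<equiv> ltree E \<sigma>"

lemma ltree_edge_iff: "(x, y) \<in> T \<longleftrightarrow> (x \<in> V \<and> x \<noteq> s \<and> y = parent x) \<or> (y \<in> V \<and> y \<noteq> s \<and> x = parent y)"
  unfolding ltree_iff_ltree_parent[OF sigma_distinct] ltree_parent_iff_parent by blast

definition parent_rel :: "('a \<times> 'a) set" where
  "parent_rel = {(v, parent v) | v. v \<in> V \<and> v \<noteq> s}"

lemma parent_relI: "v \<in> V \<Longrightarrow> v \<noteq> s \<Longrightarrow> (v, parent v) \<in> parent_rel"
  unfolding parent_rel_def by blast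

lemma parent_relD: "(v, a) \<in> parent_rel \<Longrightarrow> v \<in> V \<and> v \<noteq> s \<and> a = parent v"
  unfolding parent_rel_def by blast

lemma ancestor_before: "(v, a) \<in> parent_rel\<^sup>+ \<Longrightarrow> a \<prec> v"
proof (induction rule: trancl_induct)
  case (base y)
  then show ?case using parent parent_relD by blast
next
  case (step y z)
  then have "z \<prec> y" using parent parent_relD by blast
  then show ?case using step prec_trans[OF sigma_distinct] by blast
qed

lemma ancestor_or_self_before: "(v, a) \<in> parent_rel\<^sup>* \<Longrightarrow> v = a \<or> a \<prec> v"
  using ancestor_before by (metis rtrancl_eq_or_trancl)

lemma ancestors_comparable:
  "(z, a) \<in> parent_rel\<^sup>* \<Longrightarrow> (z, b) \<in> parent_rel\<^sup>* \<Longrightarrow> (a, b) \<in> parent_rel\<^sup>* \<or> (b, a) \<in> parent_rel\<^sup>*"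
  using single_valued_confluent[of parent_rel] unfolding single_valued_def parent_rel_def by blast

text \<open>The L-tree is the DFS tree of \<sigma>: a visited vertex with an unvisited neighbour lies on
  the current DFS stack, i.e., is an ancestor of the last visited vertex.\<close>

lemma on_stack:
  "1 \<le> i \<Longrightarrow> i \<le> n \<Longrightarrow> u \<in> set (take i \<sigma>) \<Longrightarrow> c \<in> V \<Longrightarrow> c \<notin> set (take i \<sigma>) \<Longrightarrow> (u, c) \<in> E
   \<Longrightarrow> (\<sigma> ! (i - 1), u) \<in> parent_rel\<^sup>*"
proof (induction i arbitrary: u c rule: nat_induct_at_least)
  case base
  then have "u = \<sigma> ! 0" using n_pos by (cases \<sigma>) auto
  then show ?case by simp
next
  case (Suc i)
  define v where "v = \<sigma> ! i"
  have i: "i < n" using Suc by simp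
  have vV: "v \<in> V" and vs: "v \<noteq> s" using i Suc.hyps nth_not_s v_def by auto
  note P = parent[OF vV vs]
  have tk: "take (Suc i) \<sigma> = take i \<sigma> @ [v]" using i v_def by (simp add: take_Suc_conv_app_nth)
  show ?case
  proof (cases "u = v")
    case False
    then have ut: "u \<in> set (take i \<sigma>)" and ct: "c \<notin> set (take i \<sigma>)" using Suc.prems tk by auto
    have IHu: "(\<sigma> ! (i - 1), u) \<in> parent_rel\<^sup>*"
      using Suc.IH[OF _ ut Suc.prems(3) ct Suc.prems(5)] i by simp
    have "parent v \<in> set (take i \<sigma>)" "v \<notin> set (take i \<sigma>)"
      using P(2,3) in_take_iff_idx before_iff_idx vV v_def i by auto
    then have IHp: "(\<sigma> ! (i - 1), parent v) \<in> parent_rel\<^sup>*" using Suc.IH[OF _ _ vV _ P(1)] i by simp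
    have vp: "(v, parent v) \<in> parent_rel" using parent_relI vV vs by simp
    from ancestors_comparable[OF IHu IHp] show ?thesis
    proof
      assume "(u, parent v) \<in> parent_rel\<^sup>*"
      then have "u = parent v \<or> parent v \<prec> u" using ancestor_or_self_before by blast
      moreover have "\<not> parent v \<prec> u"
      proof
        \<comment> \<open>else the four-point condition for u, v, c gives a neighbour of v after parent v\<close>
        assume pu: "parent v \<prec> u"
        have uV: "u \<in> V" using Suc.prems edge_in_V by blast
        have uv: "u \<prec> v" using ut in_take_iff_idx uV before_iff_idx v_def i vV by simp
        have vc: "v \<prec> c" using Suc.prems(3,4) in_take_iff_idx before_iff_idx vV v_def i idx_spec
          by (metis idx_nth not_less_eq)
        obtain d where "u \<prec> d" "d \<prec> v" "(d, v) \<in> E"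
          using four_point[OF uv vc Suc.prems(5)] P(4) pu uv by blast
        then show False using P(4) pu prec_trans[OF sigma_distinct] by blast
      qed
      ultimately show ?thesis using vp v_def by simp
    next
      assume "(parent v, u) \<in> parent_rel\<^sup>*"
      then show ?thesis using vp v_def by simp
    qed
  qed (simp add: v_def)
qed

lemma edge_ancestor: "(u, w) \<in> E \<Longrightarrow> u \<prec> w \<Longrightarrow> (w, u) \<in> parent_rel\<^sup>+"
proof -
  assume e: "(u, w) \<in> E" and uw: "u \<prec> w"
  have V: "u \<in> V" "w \<in> V" and ws: "w \<noteq> s" using e edge_in_V uw before_iff_idx by auto
  define i where "i = idx w"
  have i: "1 \<le> i" "i \<le> n" using idx_pos[OF V(2) ws] idx_spec[OF V(2)] i_def by auto
  have ut: "u \<in> set (take i \<sigma>)" and wt: "w \<notin> set (take i \<sigma>)"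
    using in_take_iff_idx V uw before_iff_idx i_def by auto
  note P = parent[OF V(2) ws]
  have pt: "parent w \<in> set (take i \<sigma>)" using in_take_iff_idx P(2,3) before_iff_idx i_def by simp
  have a: "(\<sigma> ! (i - 1), u) \<in> parent_rel\<^sup>*" using on_stack[OF i ut V(2) wt e] .
  have b: "(\<sigma> ! (i - 1), parent w) \<in> parent_rel\<^sup>*" using on_stack[OF i pt V(2) wt P(1)] .
  have wp: "(w, parent w) \<in> parent_rel" using parent_relI V ws by simp
  from ancestors_comparable[OF a b] show "(w, u) \<in> parent_rel\<^sup>+"
  proof
    assume "(u, parent w) \<in> parent_rel\<^sup>*"
    then have "u = parent w \<or> parent w \<prec> u" using ancestor_or_self_before by blast
    then show ?thesis using wp P(4) uw e by blast
  next
    assume "(parent w, u) \<in> parent_rel\<^sup>*"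
    then show ?thesis using wp by (meson rtrancl_into_trancl2)
  qed
qed

lemma no_tree_edge_after_parent:
  assumes i: "1 \<le> i" "i < n" and y: "y \<in> set (take i \<sigma>)" "parent (\<sigma> ! i) \<prec> y"
    and x: "x \<in> V" "x \<notin> set (take i \<sigma>)"
  shows "(y, x) \<notin> T"
proof
  assume "(y, x) \<in> T"
  define v where "v = \<sigma> ! i"
  have vV: "v \<in> V" and vs: "v \<noteq> s" using i nth_not_s v_def by auto
  note P = parent[OF vV vs]
  have yV: "y \<in> V" using y set_sigma by (meson in_set_takeD)
  have yi: "idx y < i" using y in_take_iff_idx yV by simp
  from \<open>(y, x) \<in> T\<close>[unfolded ltree_edge_iff] show False
  proof
    assume "y \<in> V \<and> y \<noteq> s \<and> x = parent y"
    then have "x \<prec> y" using parent by blast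
    then show False using yi before_iff_idx x in_take_iff_idx by simp
  next
    assume h: "x \<in> V \<and> x \<noteq> s \<and> y = parent x"
    have "x \<noteq> v" using h y(2) v_def prec_irrefl[OF sigma_distinct] by blast
    then have "idx x \<noteq> i" using v_def idx_spec[OF x(1)] by metis
    then have vx: "v \<prec> x" using x in_take_iff_idx before_iff_idx vV v_def i by simp
    have yv: "y \<prec> v" using before_iff_idx yV vV yi v_def i by simp
    obtain d where "y \<prec> d" "d \<prec> v" "(d, v) \<in> E"
      using four_point[OF yv vx] h parent P(4) y(2) yv v_def by blast
    then show False using P(4) y(2) prec_trans[OF sigma_distinct] v_def by blast
  qed
qed

lemma tree_cut:
  "A \<subseteq> V \<Longrightarrow> s \<in> A \<Longrightarrow> w \<in> V \<Longrightarrow> w \<notin> A \<Longrightarrow> \<exists>y. y \<in> V \<and> y \<notin> A \<and> y \<noteq> s \<and> parent y \<in> A"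
proof (induction "idx w" arbitrary: w rule: less_induct)
  case less
  have ws: "w \<noteq> s" using less by auto
  note P = parent[OF less.prems(3) ws]
  show ?case
  proof (cases "parent w \<in> A")
    case False
    have "idx (parent w) < idx w" using P(2) before_iff_idx by simp
    then show ?thesis using less.hyps[OF _ less.prems(1,2) P(3) False] by blast
  qed (use less ws in blast)
qed

lemma tree_crossing_edge: "s \<in> A \<Longrightarrow> A \<subset> V \<Longrightarrow> \<exists>x\<in>A. \<exists>w\<in>V - A. (x, w) \<in> T"
proof -
  assume "s \<in> A" "A \<subset> V"
  then obtain y where "y \<in> V" "y \<notin> A" "y \<noteq> s" "parent y \<in> A" using tree_cut[of A] by blast
  moreover have "(parent y, y) \<in> T" using ltree_edge_iff calculation by blast
  ultimately show ?thesis by blast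
qed

lemma tree_bfs_order_exists: "\<exists>b. is_bfs_order V T s b"
  using bfs_order_exists[OF finite_V s_in_V tree_crossing_edge] .

text \<open>The set of procedure Ordering that refines the partition at v:
  the neighbours of v that precede v in \<beta> = rev b.\<close>

definition later_nbrs :: "'a list \<Rightarrow> 'a \<Rightarrow> 'a set" where
  "later_nbrs b v = {w. (v, w) \<in> E \<and> prec b v w}"

context
  fixes b assumes bfs: "is_bfs_order V T s b"
begin

lemma bfs_distinct: "distinct b" and set_bfs: "set b = V" and bfs_first: "b ! 0 = s"
  and length_bfs: "length b = n"
  using bfs distinct_card[of b] card_V unfolding is_bfs_order_def vertex_order_def by auto

lemma bfs_tree_nbr:
  assumes i: "0 < i" "i < n"
  shows "\<exists>x\<in>set (take i b). (x, b ! i) \<in> T"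
proof -
  have "b ! i \<in> V - set (take i b)"
    using i set_bfs length_bfs nth_notin_set_take[OF bfs_distinct] by auto
  moreover have "s \<in> set (take i b)" using i bfs_first length_bfs by (auto simp: in_set_conv_nth)
  moreover have "set (take i b) \<subseteq> V" using set_bfs set_take_subset by metis
  ultimately have "s \<in> set (take i b)" "set (take i b) \<subset> V" by auto
  then have "\<exists>x\<in>set (take i b). \<exists>w\<in>V - set (take i b). (x, w) \<in> T" by (rule tree_crossing_edge)
  then show ?thesis using bfs_order_earlier_nbr[OF bfs] i length_bfs by simp
qed

lemma bfs_parent_closed: "k \<le> n \<Longrightarrow> y \<in> set (take k b) \<Longrightarrow> y \<noteq> s \<Longrightarrow> parent y \<in> set (take k b)"
proof (induction k arbitrary: y)
  case (Suc k)
  have k: "k < n" using Suc.prems by simp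
  have tk: "take (Suc k) b = take k b @ [b ! k]" using k length_bfs by (simp add: take_Suc_conv_app_nth)
  show ?case
  proof (cases "y \<in> set (take k b)")
    case False
    then have y: "y = b ! k" using Suc.prems tk by simp
    then have "0 < k" using Suc.prems bfs_first by (metis gr0I)
    then obtain x where x: "x \<in> set (take k b)" "(x, b ! k) \<in> T" using bfs_tree_nbr k by blast
    from x(2)[unfolded ltree_edge_iff] show ?thesis
    proof
      assume "x \<in> V \<and> x \<noteq> s \<and> b ! k = parent x"
      then have "b ! k \<in> set (take k b)" using Suc.IH x(1) k by simp
      then show ?thesis using nth_notin_set_take[OF bfs_distinct] k length_bfs by simp
    qed (use x(1) y tk in simp)
  qed (use Suc tk in simp)
qed simp

lemma bfs_parent_before: "y \<in> V \<Longrightarrow> y \<noteq> s \<Longrightarrow> prec b (parent y) y"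
proof -
  assume y: "y \<in> V" "y \<noteq> s"
  obtain k where k: "k < n" "b ! k = y" using y set_bfs length_bfs by (metis in_set_conv_nth)
  have "parent y \<in> set (take (Suc k) b)"
    using bfs_parent_closed[of "Suc k" y] k y length_bfs by (simp add: take_Suc_conv_app_nth)
  moreover have "parent y \<noteq> y" using parent[OF y] prec_irrefl[OF sigma_distinct] by metis
  ultimately have "parent y \<in> set (take k b)" using k length_bfs by (simp add: take_Suc_conv_app_nth)
  then obtain l where "l < k" "b ! l = parent y" using k length_bfs by (auto simp: in_set_conv_nth)
  then show ?thesis using prec_nth[OF bfs_distinct, of l k] k length_bfs by auto
qed

lemma bfs_ancestor_before: "(v, a) \<in> parent_rel\<^sup>+ \<Longrightarrow> prec b a v"
proof (induction rule: trancl_induct)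
  case (base y)
  then show ?case using parent_relD bfs_parent_before by blast
next
  case (step y z)
  then show ?case using parent_relD bfs_parent_before prec_trans[OF bfs_distinct] by blast
qed

text \<open>Here v is a proper ancestor of c1 not adjacent to it; the four-point condition for v, c1, c2
  yields d, a descendant of v and hence later in the BFS order.\<close>

lemma separator_swap:
  assumes c: "c1 \<in> V" "c1 \<noteq> s" "c2 \<noteq> s" "parent c1 = parent c2" "c1 \<prec> c2"
    and v: "c2 \<in> later_nbrs b v" "c1 \<notin> later_nbrs b v"
  shows "\<exists>d. c1 \<in> later_nbrs b d \<and> c2 \<notin> later_nbrs b d \<and> prec b v d"
proof -
  have e2: "(v, c2) \<in> E" and p2: "prec b v c2" using v(1) unfolding later_nbrs_def by auto
  have "\<not> c2 \<prec> v"
    using edge_ancestor[OF edge_sym[OF e2]] bfs_ancestor_before p2 prec_asym[OF bfs_distinct] by blast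
  then have "v \<prec> c2" using before_total e2 edge_in_V edge_irrefl by metis
  then obtain z where z: "(c2, z) \<in> parent_rel" "(z, v) \<in> parent_rel\<^sup>*"
    using edge_ancestor[OF e2] by (metis tranclD)
  have "v \<noteq> parent c1"
    using v(2) parent[OF c(1,2)] bfs_parent_before[OF c(1,2)] unfolding later_nbrs_def by auto
  then have "(parent c1, v) \<in> parent_rel\<^sup>+" using z parent_relD c(4) by (metis rtrancl_eq_or_trancl)
  then have c1v: "(c1, v) \<in> parent_rel\<^sup>+" using parent_relI[OF c(1,2)] by (meson trancl_into_trancl2)
  then have "(v, c1) \<notin> E" using v(2) bfs_ancestor_before unfolding later_nbrs_def by blast
  then obtain d where d: "v \<prec> d" "d \<prec> c1" "(d, c1) \<in> E" "(d, c2) \<notin> E"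
    using four_point[OF ancestor_before[OF c1v] c(5) e2] by blast
  have c1d: "(c1, d) \<in> parent_rel\<^sup>+" using edge_ancestor[OF d(3) d(2)] .
  have "(d, v) \<in> parent_rel\<^sup>* \<or> (v, d) \<in> parent_rel\<^sup>*"
    using ancestors_comparable c1d c1v by (meson trancl_into_rtrancl)
  moreover have "(v, d) \<notin> parent_rel\<^sup>*"
    using d(1) ancestor_or_self_before prec_irrefl[OF sigma_distinct] prec_asym[OF sigma_distinct]
    by blast
  ultimately have "(d, v) \<in> parent_rel\<^sup>+"
    using d(1) prec_irrefl[OF sigma_distinct] by (metis rtrancl_eq_or_trancl)
  then show ?thesis
    using d bfs_ancestor_before[OF c1d] bfs_ancestor_before unfolding later_nbrs_def by blast
qed

lemma siblings_class_order:
  assumes c: "c1 \<in> V" "c1 \<noteq> s" "c2 \<noteq> s" "parent c1 = parent c2" "c1 \<prec> c2"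
  defines "Q \<equiv> foldl refine [V] (map (later_nbrs b) (rev b))"
  shows "same_class Q c1 c2 \<or> class_before Q c1 c2"
  unfolding Q_def
proof (rule foldl_refine_first_separator)
  have "c2 \<in> V" using c(5) prec_in_set set_sigma by metis
  then show "same_class [V] c1 c2" using c(1) unfolding same_class_def by simp
next
  fix k assume k: "k < length (map (later_nbrs b) (rev b))" and
    sep: "c2 \<in> map (later_nbrs b) (rev b) ! k" "c1 \<notin> map (later_nbrs b) (rev b) ! k"
  then obtain d where d: "c1 \<in> later_nbrs b d" "c2 \<notin> later_nbrs b d" "prec b (rev b ! k) d"
    using separator_swap[OF c] by auto
  then have "prec (rev b) d (rev b ! k)" by (simp add: prec_rev)
  then have "d \<in> set (take k (rev b))" using prec_nth_in_take[of "rev b" k d] k bfs_distinct by simp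
  then obtain j where "j < k" "rev b ! j = d" using k by (auto simp: in_set_conv_nth)
  then show "\<exists>j<k. c1 \<in> map (later_nbrs b) (rev b) ! j \<and> c2 \<notin> map (later_nbrs b) (rev b) ! j"
    using d k by auto
qed

end

subsection \<open>Depth-first search of the L-tree\<close>

lemma dfs_backtrack:
  assumes i: "1 \<le> i" "i < n" and U: "set U = V - set (take i \<sigma>)"
  shows "last (filter (\<lambda>x. \<exists>w\<in>set U. (x, w) \<in> T) (take i \<sigma>)) = parent (\<sigma> ! i)"
proof (rule last_eq_if_prec)
  define v where "v = \<sigma> ! i"
  have vV: "v \<in> V" and vs: "v \<noteq> s" using i nth_not_s v_def by auto
  note P = parent[OF vV vs]
  have pt: "parent v \<in> set (take i \<sigma>)" and vU: "v \<in> set U"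
    using in_take_iff_idx P(2,3) before_iff_idx vV v_def i U by auto
  have pvT: "(parent v, v) \<in> T" using ltree_edge_iff vV vs by blast
  show "distinct (filter (\<lambda>x. \<exists>w\<in>set U. (x, w) \<in> T) (take i \<sigma>))" using sigma_distinct by simp
  show "parent (\<sigma> ! i) \<in> set (filter (\<lambda>x. \<exists>w\<in>set U. (x, w) \<in> T) (take i \<sigma>))"
    using pt vU pvT v_def by auto
  fix y assume y: "y \<in> set (filter (\<lambda>x. \<exists>w\<in>set U. (x, w) \<in> T) (take i \<sigma>))" "y \<noteq> parent (\<sigma> ! i)"
  then obtain w where yt: "y \<in> set (take i \<sigma>)" and w: "w \<in> set U" "(y, w) \<in> T" by auto
  have "\<not> parent v \<prec> y" using no_tree_edge_after_parent[OF i yt] w U v_def by blast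
  moreover have "y \<in> V" using yt set_sigma by (meson in_set_takeD)
  ultimately have "y \<prec> parent v" using before_total y(2) P(3) v_def by blast
  then have "prec (take i \<sigma>) y (parent v)" using prec_take[OF sigma_distinct] yt pt by blast
  then show "prec (filter (\<lambda>x. \<exists>w\<in>set U. (x, w) \<in> T) (take i \<sigma>)) y (parent (\<sigma> ! i))"
    unfolding prec_filter using w vU pvT v_def by blast
qed

definition siblings_reversed :: "'a list \<Rightarrow> bool" where
  "siblings_reversed \<tau> \<longleftrightarrow> (\<forall>c1 c2. c1 \<in> V \<and> c2 \<in> V \<and> c1 \<noteq> s \<and> c2 \<noteq> s \<and> parent c1 = parent c2 \<and>
     c1 \<prec> c2 \<longrightarrow> prec \<tau> c2 c1)"

lemma dfs_next_child:
  assumes i: "1 \<le> i" "i < n" and \<tau>: "distinct \<tau>" "set \<tau> = V" "siblings_reversed \<tau>"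
  defines "U \<equiv> filter (\<lambda>v. v \<notin> set (take i \<sigma>)) \<tau>"
  shows "last (filter (\<lambda>w. (parent (\<sigma> ! i), w) \<in> T) U) = \<sigma> ! i"
proof (rule last_eq_if_prec)
  define v where "v = \<sigma> ! i"
  have vV: "v \<in> V" and vs: "v \<noteq> s" using i nth_not_s v_def by auto
  note P = parent[OF vV vs]
  have vU: "v \<in> set U" using in_take_iff_idx vV v_def i \<tau> U_def by auto
  have pvT: "(parent v, v) \<in> T" using ltree_edge_iff vV vs by blast
  show "distinct (filter (\<lambda>w. (parent (\<sigma> ! i), w) \<in> T) U)" using \<tau> U_def by simp
  show "\<sigma> ! i \<in> set (filter (\<lambda>w. (parent (\<sigma> ! i), w) \<in> T) U)" using vU pvT v_def by simp
  fix c assume c: "c \<in> set (filter (\<lambda>w. (parent (\<sigma> ! i), w) \<in> T) U)" "c \<noteq> \<sigma> ! i"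
  then have cU: "c \<in> set U" and pc: "(parent v, c) \<in> T" using v_def by auto
  then have cV: "c \<in> V" and ct: "c \<notin> set (take i \<sigma>)" using \<tau> U_def by auto
  have "c \<noteq> s \<and> parent c = parent v"
  proof -
    have "parent v \<in> set (take i \<sigma>)" using in_take_iff_idx P(2,3) before_iff_idx vV v_def i by auto
    moreover have "parent (parent v) \<prec> parent v" if "parent v \<noteq> s" using parent P(3) that by blast
    ultimately show ?thesis
      using pc ct ltree_edge_iff prec_take_closed[OF sigma_distinct] by metis
  qed
  moreover have "v \<prec> c"
  proof -
    have "idx c \<noteq> i" using c(2) idx_spec[OF cV] by auto
    moreover have "i \<le> idx c" using ct in_take_iff_idx[OF cV] by simp
    ultimately show ?thesis using before_iff_idx vV cV i v_def by simp
  qed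
  ultimately have "prec \<tau> c v" using \<tau>(3) cV vV vs unfolding siblings_reversed_def by metis
  then show "prec (filter (\<lambda>w. (parent (\<sigma> ! i), w) \<in> T) U) c (\<sigma> ! i)"
    unfolding U_def prec_filter using cV ct vU pvT c v_def U_def by auto
qed

lemma dfs_plus_eq_sigma:
  assumes \<tau>: "distinct \<tau>" "set \<tau> = V" "last \<tau> = s" "siblings_reversed \<tau>"
  shows "dfs_plus T \<tau> = \<sigma>"
proof -
  have "dfs_plus_aux T \<tau> k = take (Suc k) \<sigma>" if "k < n" for k
    using that
  proof (induction k)
    case 0
    then show ?case using \<tau>(3) sigma_first n_pos by (cases \<sigma>) auto
  next
    case (Suc k)
    define U where "U = filter (\<lambda>v. v \<notin> set (take (Suc k) \<sigma>)) \<tau>"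
    have i: "1 \<le> Suc k" "Suc k < n" and IH: "dfs_plus_aux T \<tau> k = take (Suc k) \<sigma>" using Suc by auto
    have "set U = V - set (take (Suc k) \<sigma>)" using \<tau>(2) U_def by auto
    note backtrack = dfs_backtrack[OF i this]
    have "dfs_plus_aux T \<tau> (Suc k) = take (Suc k) \<sigma> @
        [last (filter (\<lambda>w. (last (filter (\<lambda>x. \<exists>w\<in>set U. (x, w) \<in> T) (take (Suc k) \<sigma>)), w) \<in> T) U)]"
      unfolding dfs_plus_aux.simps Let_def IH U_def ..
    also have "\<dots> = take (Suc k) \<sigma> @ [\<sigma> ! Suc k]"
      unfolding backtrack using dfs_next_child[OF i \<tau>(1,2,4)] unfolding U_def[symmetric] by simp
    finally show ?case using Suc.prems by (simp add: take_Suc_conv_app_nth)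
  qed
  moreover have "length \<tau> = n" using distinct_card[OF \<tau>(1)] \<tau>(2) card_V by simp
  ultimately show ?thesis unfolding dfs_plus_def using n_pos by simp
qed

lemma ordering_eq_sigma:
  assumes bfs: "is_bfs_order V T s b"
  shows "ordering V E T s (rev \<sigma>) (rev b) = \<sigma>"
proof -
  define Q where "Q = foldl refine [V] (map (later_nbrs b) (rev b))"
  have "foldl (\<lambda>Q v. refine Q {w. (v, w) \<in> E \<and> prec (rev b) w v}) [V] (rev b) = Q"
    unfolding Q_def foldl_map later_nbrs_def prec_rev ..
  moreover define ord where "ord = s # filter (\<lambda>v. v \<noteq> s) (flatten_classes \<sigma> Q)"
  ultimately have "ordering V E T s (rev \<sigma>) (rev b) = dfs_plus T (rev ord)"
    unfolding ordering_def Let_def ord_def flatten_classes_def by simp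
  also have "\<dots> = \<sigma>"
  proof (rule dfs_plus_eq_sigma)
    have Q: "disjoint_classes Q" "\<Union>(set Q) = V" using foldl_refine_partition[of "[V]"] Q_def by auto
    show "distinct (rev ord)" using distinct_flatten_classes[OF sigma_distinct Q(1)] ord_def by simp
    show "set (rev ord) = V" using set_flatten_classes[of \<sigma> Q] Q set_sigma s_in_V ord_def by auto
    show "last (rev ord) = s" unfolding ord_def by simp
    show "siblings_reversed (rev ord)" unfolding siblings_reversed_def prec_rev
    proof (intro allI impI)
      fix c1 c2 assume c: "c1 \<in> V \<and> c2 \<in> V \<and> c1 \<noteq> s \<and> c2 \<noteq> s \<and> parent c1 = parent c2 \<and> c1 \<prec> c2"
      then have "same_class Q c1 c2 \<or> class_before Q c1 c2"
        using siblings_class_order[OF bfs] Q_def by blast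
      then have "prec (flatten_classes \<sigma> Q) c1 c2"
        using prec_flatten_classes_same[of Q c1 c2 \<sigma>] prec_flatten_classes_before[of Q c1 c2 \<sigma>] c set_sigma
        by auto
      then show "prec ord c1 c2" unfolding ord_def prec_Cons prec_filter using c by blast
    qed
  qed
  finally show ?thesis .
qed

end

locale chordal_lexdfs_order = lexdfs_order +
  assumes chordal: "chordal V E"
begin

lemma no_high_path: "\<not> high_path a b w"
proof (induction "idx b" arbitrary: a b w rule: less_induct)
  case less
  show ?case
  proof
    assume "high_path a b w"
    then obtain w where hp: "high_path a b w" and min: "\<forall>w'. high_path a b w' \<longrightarrow> length w \<le> length w'"
      using ex_has_least_nat[of "high_path a b" w length] by blast
    obtain d cs where d: "a \<prec> d" "d \<prec> b" and cs: "cs ! 0 = a" "cs ! (length cs - 1) = d" "3 < length cs"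
      "walk E cs" "distinct cs" "\<And>i. 0 < i \<Longrightarrow> i < length cs - 1 \<Longrightarrow> d \<prec> cs ! i"
      "\<And>i j. Suc i < j \<Longrightarrow> j < length cs \<Longrightarrow> (cs ! i, cs ! j) \<in> E \<Longrightarrow> i = 0 \<and> j = length cs - 1"
      using minimal_high_path_shortcut[OF hp min] by blast
    show False
    proof (cases "(a, d) \<in> E")
      case True
      have "sym E" using edge_sym unfolding sym_def by blast
      then have "induced_cycle E cs" using induced_cycle_if_chordless cs True by metis
      moreover have "set cs \<subseteq> V" using walk_in_V cs by simp
      ultimately show False using chordal cs(3) unfolding chordal_def by blast
    next
      case False
      then have "high_path a d cs" using d cs unfolding high_path_def by auto
      moreover have "idx d < idx b" using d(2) before_iff_idx by blast
      ultimately show False using less by blast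
    qed
  qed
qed

lemma earlier_neighbours_adjacent:
  assumes "a \<prec> v" "b \<prec> v" "(a, v) \<in> E" "(b, v) \<in> E" "a \<noteq> b"
  shows "(a, b) \<in> E"
proof (rule ccontr)
  assume nab: "(a, b) \<notin> E"
  have "high_path x y [x, v, y]" if "x \<prec> y" "(x, y) \<notin> E" "y \<prec> v" "(x, v) \<in> E" "(y, v) \<in> E" for x y
  proof -
    have "walk E [x, v, y]" unfolding walk_def
    proof (intro allI impI)
      fix i assume "Suc i < length [x, v, y]"
      then have "i = 0 \<or> i = 1" by auto
      then show "([x, v, y] ! i, [x, v, y] ! Suc i) \<in> E" using that edge_sym by auto
    qed
    moreover have "i = 1" if "0 < i" "i < length [x, v, y] - 1" for i
      using that by simp
    ultimately show ?thesis using that unfolding high_path_def by auto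
  qed
  moreover have "a \<prec> b \<or> b \<prec> a" using assms prec_total prec_in_set by metis
  ultimately show False using no_high_path assms nab edge_sym by metis
qed

subsection \<open>LexBFS+ from the reverse of \<sigma>\<close>

abbreviation lbfs_lab :: "'a list \<Rightarrow> 'a \<Rightarrow> nat list" where
  "lbfs_lab \<equiv> lbfs_label E s n"

abbreviation lexbfs_prefix :: "nat \<Rightarrow> 'a list" where
  "lexbfs_prefix k \<equiv> greedy_search lbfs_lab (rev \<sigma>) k"

definition \<pi> :: "'a list" where
  "\<pi> = lexbfs_plus E (rev \<sigma>)"

lemma last_rev_sigma: "last (rev \<sigma>) = s"
  using sigma_first n_pos by (simp add: last_rev hd_conv_nth)

lemma pi_eq: "\<pi> = lexbfs_prefix n"
  unfolding \<pi>_def lexbfs_plus_def last_rev_sigma by simp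

lemma pi_distinct: "distinct \<pi>" and set_pi: "set \<pi> = V"
  using greedy_search_vertex_order[of "rev \<sigma>"] sigma_distinct set_sigma
  unfolding pi_eq by auto

lemma take_pi: "k \<le> n \<Longrightarrow> take k \<pi> = lexbfs_prefix k"
  unfolding pi_eq by (rule greedy_search_prefix[symmetric])

lemma lbfs_lab_sorted:
  assumes "v \<noteq> s" "length p \<le> n"
  shows "sorted_wrt (>) (lbfs_lab p v)"
proof -
  have "[n - Suc j. j \<leftarrow> [0..<k], Q j] = map (\<lambda>j. n - Suc j) (filter Q [0..<k])" for k Q
    by (induction k) auto
  moreover have "sorted_wrt (\<lambda>x y. n - Suc y < n - Suc x) [0..<length p]"
    unfolding sorted_wrt_iff_nth_less using assms(2) by auto
  ultimately show ?thesis
    using assms(1) unfolding lbfs_label_def by (simp add: sorted_wrt_map sorted_wrt_filter)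
qed

lemma set_lbfs_lab: "v \<noteq> s \<Longrightarrow> set (lbfs_lab p v) = {n - Suc j | j. j < length p \<and> (p ! j, v) \<in> E}"
  unfolding lbfs_label_def by auto

lemma distinct_rev_sigma: "distinct (rev \<sigma>)"
  using sigma_distinct by simp

lemma lexbfs_prefix_one: "lexbfs_prefix 1 = [s]"
proof -
  obtain x where x: "lexbfs_prefix 1 = [] @ [x]" "\<And>w. w \<in> set (rev \<sigma>) \<Longrightarrow> lex_le (lbfs_lab [] w) (lbfs_lab [] x)"
    using greedy_search_step[OF distinct_rev_sigma, of 0 lbfs_lab] n_pos by auto
  have "lex_le (lbfs_lab [] s) (lbfs_lab [] x)" using x(2) s_in_V set_sigma by simp
  then have "x = s" by (cases "x = s") (auto simp: lbfs_label_def)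
  then show ?thesis using x by simp
qed

text \<open>LexBFS+ from the reverse of \<sigma> visits a vertex only after all its neighbours that precede it
  in \<sigma>: by the clique property the labels of those neighbours dominate its own, and ties are
  broken in favour of the \<sigma>-earlier vertex.\<close>

definition earlier_nbrs_closed :: "'a list \<Rightarrow> bool" where
  "earlier_nbrs_closed p \<longleftrightarrow> (\<forall>w\<in>set p. \<forall>u. (u, w) \<in> E \<longrightarrow> u \<prec> w \<longrightarrow> u \<in> set p)"

lemma lbfs_lab_subset:
  assumes closed: "earlier_nbrs_closed p" and p: "set p \<subseteq> V" and x: "x \<in> V" "x \<notin> set p" "x \<noteq> s"
    and y: "(y, x) \<in> E" "y \<prec> x" "y \<notin> set p" "y \<noteq> s"
  shows "set (lbfs_lab p x) \<subseteq> set (lbfs_lab p y)"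
proof
  fix t assume "t \<in> set (lbfs_lab p x)"
  then obtain j where j: "j < length p" "(p ! j, x) \<in> E" "t = n - Suc j"
    using set_lbfs_lab[OF x(3)] by auto
  have "p ! j \<in> set p" using j(1) by simp
  then have "p ! j \<in> V" "p ! j \<noteq> x" "p ! j \<noteq> y" using x y p by auto
  moreover have "\<not> x \<prec> p ! j"
    using closed j x(2) edge_sym nth_mem unfolding earlier_nbrs_closed_def by blast
  ultimately have "p ! j \<prec> x" using before_total x(1) by blast
  then have "(p ! j, y) \<in> E" using earlier_neighbours_adjacent y j \<open>p ! j \<noteq> y\<close> by blast
  then show "t \<in> set (lbfs_lab p y)" using set_lbfs_lab[OF y(4)] j by auto
qed

lemma lexbfs_prefix_closed: "k \<le> n \<Longrightarrow> earlier_nbrs_closed (lexbfs_prefix k)"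
proof (induction k)
  case 0
  then show ?case by (simp add: earlier_nbrs_closed_def)
next
  case (Suc k)
  define p where "p = lexbfs_prefix k"
  have "k < length (rev \<sigma>)" using Suc.prems by simp
  from greedy_search_step[OF distinct_rev_sigma this, where lab = lbfs_lab]
  obtain x where x: "lexbfs_prefix (Suc k) = p @ [x]" "x \<in> set (rev \<sigma>)" "x \<notin> set p"
    and max: "\<And>w. w \<in> set (rev \<sigma>) \<Longrightarrow> w \<notin> set p \<Longrightarrow> lex_le (lbfs_lab p w) (lbfs_lab p x)"
    and tie: "\<And>y. y \<in> set (rev \<sigma>) \<Longrightarrow> y \<notin> set p \<Longrightarrow> lbfs_lab p y = lbfs_lab p x \<Longrightarrow> y \<noteq> x \<Longrightarrow>
      prec (rev \<sigma>) y x"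
    unfolding p_def by blast
  have closed: "earlier_nbrs_closed p" using Suc p_def by simp
  have xV: "x \<in> V" using x(2) set_sigma by simp
  have p: "set p \<subseteq> V" "length p = k"
    using take_pi[of k] Suc.prems set_pi set_take_subset[of k \<pi>] greedy_search_length p_def by auto
  have "y \<in> set p" if y: "(y, x) \<in> E" "y \<prec> x" for y
  proof (rule ccontr)
    assume yp: "y \<notin> set p"
    have xs: "x \<noteq> s" using y(2) before_iff_idx by auto
    then have "k \<noteq> 0"
      using x(1) lexbfs_prefix_one p_def
        by (metis One_nat_def append_Nil greedy_search.simps(1) list.inject)
    then have "1 \<le> k" by simp
    then have "lexbfs_prefix 1 = take 1 p" unfolding p_def by (rule greedy_search_prefix)
    then have "s \<in> set p" using lexbfs_prefix_one by (metis in_set_takeD list.set_intros(1))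
    then have ys: "y \<noteq> s" using yp by auto
    have "set (lbfs_lab p x) \<subseteq> set (lbfs_lab p y)"
      using lbfs_lab_subset closed p(1) xV x(3) y yp xs ys by blast
    then have "lex_le (lbfs_lab p x) (lbfs_lab p y)"
      using lex_le_if_subset lbfs_lab_sorted xs ys p(2) Suc.prems by simp
    moreover have y\<sigma>: "y \<in> set (rev \<sigma>)" using y edge_in_V set_sigma by auto
    ultimately have "lbfs_lab p y = lbfs_lab p x" using max yp lex_le_antisym by blast
    moreover have "y \<noteq> x" using y(2) prec_irrefl[OF sigma_distinct] by blast
    ultimately have "x \<prec> y" using tie[OF y\<sigma> yp] prec_rev by metis
    then show False using y(2) prec_asym[OF sigma_distinct] by blast
  qed
  then show ?case using closed x(1) unfolding earlier_nbrs_closed_def by auto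
qed

lemma pi_orients_edges: "(u, w) \<in> E \<Longrightarrow> prec \<pi> u w \<longleftrightarrow> u \<prec> w"
proof -
  have forward: "prec \<pi> u w" if e: "(u, w) \<in> E" and uw: "u \<prec> w" for u w
  proof -
    obtain i where i: "i < n" "\<pi> ! i = w"
      using e edge_in_V set_pi pi_distinct distinct_card card_V by (metis in_set_conv_nth)
    have "length \<pi> = n" using pi_distinct set_pi card_V distinct_card by metis
    then have "w \<in> set (lexbfs_prefix (Suc i))"
      using i take_pi[of "Suc i"] by (metis Suc_leI lessI nth_mem nth_take length_take min_less_iff_conj)
    then have "u \<in> set (take (Suc i) \<pi>)"
      using lexbfs_prefix_closed[of "Suc i"] e uw i take_pi unfolding earlier_nbrs_closed_def
        by (metis Suc_leI)
    moreover have "u \<noteq> w" using uw prec_irrefl[OF sigma_distinct] by blast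
    ultimately obtain j where "j < i" "\<pi> ! j = u" using i by (auto simp: in_set_conv_nth less_Suc_eq)
    then show ?thesis using prec_nth[OF pi_distinct, of j i] i \<open>length \<pi> = n\<close> by auto
  qed
  assume e: "(u, w) \<in> E"
  show "prec \<pi> u w \<longleftrightarrow> u \<prec> w"
  proof
    assume "prec \<pi> u w"
    moreover have "u \<noteq> w" using e edge_irrefl by blast
    ultimately show "u \<prec> w"
      using forward[OF edge_sym[OF e]] before_total e edge_in_V prec_asym[OF pi_distinct] by blast
  qed (rule forward[OF e])
qed

lemma ltree_parent_pi_iff: "ltree_parent E \<pi> c p \<longleftrightarrow> ltree_parent E \<sigma> c p"
proof
  assume h: "ltree_parent E \<pi> c p"
  then have e: "(p, c) \<in> E" and pc: "p \<prec> c" using pi_orients_edges unfolding ltree_parent_def by auto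
  have "(z, c) \<notin> E" if z: "p \<prec> z" "z \<prec> c" for z
  proof
    assume zc: "(z, c) \<in> E"
    have "z \<noteq> p" using z prec_irrefl[OF sigma_distinct] by blast
    then have "(p, z) \<in> E" using earlier_neighbours_adjacent[OF pc z(2) e zc] by blast
    then show False using h zc z pi_orients_edges unfolding ltree_parent_def by blast
  qed
  then show "ltree_parent E \<sigma> c p" unfolding ltree_parent_def using e pc by blast
next
  assume h: "ltree_parent E \<sigma> c p"
  then have e: "(p, c) \<in> E" and pc: "p \<prec> c" unfolding ltree_parent_def by auto
  have "(z, c) \<notin> E" if z: "prec \<pi> p z" "prec \<pi> z c" for z
  proof
    assume zc: "(z, c) \<in> E"
    have zc': "z \<prec> c" using pi_orients_edges zc z by blast
    have "z \<noteq> p" using z prec_irrefl[OF pi_distinct] by blast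
    then have "(p, z) \<in> E" using earlier_neighbours_adjacent[OF pc zc' e zc] by blast
    then show False using h zc zc' z pi_orients_edges unfolding ltree_parent_def by blast
  qed
  then show "ltree_parent E \<pi> c p" unfolding ltree_parent_def using e pc pi_orients_edges by blast
qed

lemma ltree_pi_eq: "ltree E \<pi> = T"
  using ltree_iff_ltree_parent[OF pi_distinct] ltree_iff_ltree_parent[OF sigma_distinct] ltree_parent_pi_iff
  by auto

lemma lexdfs_plus_chordal_outputs_rev_sigma: "lexdfs_plus_chordal_outputs V E s (rev \<sigma>) = {\<sigma>}"
proof -
  obtain b0 where "is_bfs_order V T s b0" using tree_bfs_order_exists by blast
  then show ?thesis
    unfolding lexdfs_plus_chordal_outputs_def Let_def \<pi>_def[symmetric] ltree_pi_eq
    using ordering_eq_sigma by (auto intro!: exI[of _ b0])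
qed

end

theorem corollary17:
  fixes V :: "'a set" and E :: "('a \<times> 'a) set" and s :: 'a and \<sigma> :: "'a list"
  assumes "graph V E" and "chordal V E" and "is_lexdfs_order V E s \<sigma>"
  shows "\<exists>\<rho>. \<rho> = rev \<sigma> \<and> vertex_order V \<rho> \<and> last \<rho> = s \<and>
           lexdfs_plus_chordal_outputs V E s \<rho> = {\<sigma>}"
proof -
  interpret chordal_lexdfs_order V E s \<sigma>
    using assms by unfold_locales
  have "vertex_order V (rev \<sigma>)" using sigma_distinct set_sigma unfolding vertex_order_def by simp
  then show ?thesis using last_rev_sigma lexdfs_plus_chordal_outputs_rev_sigma by blast
qed

end
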